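(* Let $G$ be a finite undirected graph with three distinct vertices $u,v,w$ such that $N(u)=\{v,w\}$ and $v,w$ are not adjacent. If $\mathrm{Ind}(G\setminus(N(u)\cup N(v)))$ and $\mathrm{Ind}(G\setminus(N(u)\cup N(w)))$ are $(k-1)$-connected, and $\mathrm{Ind}(G\setminus(N(u)\cup N(v)\cup N(w)))$ is $(k-2)$-connected, then $\mathrm{Ind}(G)$ is $k$-connected.
   Context: $N(x)$ is the set of vertices adjacent to $x$. $\mathrm{Ind}(H)$ is the simplicial complex with vertex set $V(H)$ whose simplices are the independent sets of $H$; $H\setminus W$ is the induced subgraph on $V(H)\setminus W$. A complex is $(-1)$-connected iff nonempty, and every complex is $k$-connected for $k\le-2$. *)

theory Defs
  imports "HOL-Analysis.Analysis"
begin

definition simple_graph :: "'a set \<Rightarrow> ('a \<Rightarrow> 'a \<Rightarrow> bool) \<Rightarrow> bool" where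
  "simple_graph V E \<longleftrightarrow> finite V \<and> (\<forall>x y. E x y \<longrightarrow> x \<in> V \<and> y \<in> V)
     \<and> (\<forall>x y. E x y \<longrightarrow> E y x) \<and> (\<forall>x. \<not> E x x)"

definition nbhd :: "'a set \<Rightarrow> ('a \<Rightarrow> 'a \<Rightarrow> bool) \<Rightarrow> 'a \<Rightarrow> 'a set" where
  "nbhd V E x = {y \<in> V. E x y}"

definition independent :: "('a \<Rightarrow> 'a \<Rightarrow> bool) \<Rightarrow> 'a set \<Rightarrow> bool" where
  "independent E S \<longleftrightarrow> (\<forall>x\<in>S. \<forall>y\<in>S. \<not> E x y)"

text \<open>Ind(G \ W): the simplicial complex (as its set of faces) of independent sets
  of the induced subgraph of G on V - W.\<close>
definition Ind_del :: "'a set \<Rightarrow> ('a \<Rightarrow> 'a \<Rightarrow> bool) \<Rightarrow> 'a set \<Rightarrow> 'a set set" where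
  "Ind_del V E W = {\<sigma>. \<sigma> \<subseteq> V - W \<and> independent E \<sigma>}"

text \<open>Geometric realization of a finite simplicial complex K (given by its faces):
  the convex combinations of vertices spanning a face, as points of 'a => real.\<close>
definition realization :: "'a set set \<Rightarrow> ('a \<Rightarrow> real) set" where
  "realization K = {f. {x. f x \<noteq> 0} \<in> K \<and> (\<forall>x. 0 \<le> f x) \<and> sum f {x. f x \<noteq> 0} = 1}"

definition realization_top :: "'a set set \<Rightarrow> ('a \<Rightarrow> real) topology" where
  "realization_top K = subtopology (powertop_real UNIV) (realization K)"

definition k_connected :: "int \<Rightarrow> 'b topology \<Rightarrow> bool" where
  "k_connected k X \<longleftrightarrow> (k \<ge> -1 \<longrightarrow> topspace X \<noteq> {}) \<and>
     (\<forall>i::nat. int i \<le> k \<longrightarrow> (\<forall>f. continuous_map (nsphere i) X f \<longrightarrow>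
        (\<exists>c. homotopic_with (\<lambda>_. True) (nsphere i) X f (\<lambda>_. c))))"

end

theory Submission
  imports Defs
begin

text \<open>Splitting off a vertex \<open>a\<close> writes \<open>Ind(G \ W)\<close> as \<open>Ind(G \ (W + a))\<close> with the cone
  \<open>a * Ind(G \ (W + a + N(a)))\<close> glued along its base. Such a union \<open>K \<union> a * L\<close> with
  \<open>K\<close> \<open>m\<close>-connected and \<open>L\<close> \<open>(m-1)\<close>-connected is \<open>m\<close>-connected: parametrise a sphere in it
  by the boundary of a finely subdivided cube; where the \<open>a\<close>-coordinate is small, project
  away from \<open>a\<close> into \<open>K\<close>; where it is large, the projection lands in \<open>L\<close> and is extended
  cell by cell inside \<open>L\<close>, using that the cells have dimension at most \<open>m\<close>. This deforms
  the sphere into \<open>K\<close>, where it is null-homotopic. For the corollary split off \<open>v\<close>, then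
  \<open>w\<close> from both pieces: \<open>Ind(G \ {v, w})\<close> is a cone with apex \<open>u\<close>, and the remaining
  pieces are the three complexes of the hypotheses.\<close>

section \<open>Geometric realisations\<close>

definition supp :: "('b \<Rightarrow> real) \<Rightarrow> 'b set" where
  "supp f = {x. f x \<noteq> 0}"

definition downward_closed :: "'b set set \<Rightarrow> bool" where
  "downward_closed K \<longleftrightarrow> (\<forall>\<tau>\<in>K. \<forall>\<sigma>. \<sigma> \<subseteq> \<tau> \<longrightarrow> \<sigma> \<in> K)"

definition barycentric :: "('b \<Rightarrow> real) \<Rightarrow> bool" where
  "barycentric f \<longleftrightarrow> (\<forall>x. 0 \<le> f x) \<and> finite (supp f) \<and> sum f (supp f) = 1"

lemma realization_iff: "f \<in> realization K \<longleftrightarrow> supp f \<in> K \<and> barycentric f"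
proof -
  have "sum f {x. f x \<noteq> 0} = 1 \<Longrightarrow> finite {x. f x \<noteq> 0}"
    by (metis sum.infinite zero_neq_one)
  then show ?thesis
    unfolding realization_def barycentric_def supp_def mem_Collect_eq by blast
qed

lemma realization_mono: "K \<subseteq> L \<Longrightarrow> realization K \<subseteq> realization L"
  unfolding realization_def by auto

lemma topspace_realization_top [simp]: "topspace (realization_top K) = realization K"
  unfolding realization_top_def by simp

lemma continuous_map_realization_top_iff:
  "continuous_map T (realization_top K) h \<longleftrightarrow>
    (\<forall>x\<in>topspace T. h x \<in> realization K) \<and> (\<forall>a. continuous_map T euclideanreal (\<lambda>x. h x a))"
  unfolding realization_top_def continuous_map_in_subtopology continuous_map_componentwise_UNIV Pi_iff
  by blast

lemma continuous_map_realization_coordinate: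
  assumes "continuous_map T (realization_top K) h"
  shows "continuous_map T euclideanreal (\<lambda>x. h x a)"
  using assms by (simp add: continuous_map_realization_top_iff)

lemma continuous_map_realization_mono:
  assumes "continuous_map T (realization_top L) f" "L \<subseteq> K"
  shows "continuous_map T (realization_top K) f"
  using assms realization_mono[OF assms(2)] unfolding continuous_map_realization_top_iff by blast

lemma homotopic_realization_mono:
  assumes "homotopic_with (\<lambda>_. True) T (realization_top K) f g" and "K \<subseteq> L"
  shows "homotopic_with (\<lambda>_. True) T (realization_top L) f g"
proof -
  have "continuous_map (realization_top K) (realization_top L) id"
    by (rule continuous_map_realization_mono[OF continuous_map_id \<open>K \<subseteq> L\<close>])
  from homotopic_with_compose_continuous_map_left[OF assms(1) this] show ?thesis by simp
qed

lemma sum_supp_superset: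
  assumes "finite S" "supp f \<subseteq> S"
  shows "sum f S = sum f (supp f)"
  using assms by (intro sum.mono_neutral_right) (auto simp: supp_def)

lemma
  assumes f: "barycentric f" and g: "barycentric g" and t: "0 \<le> t" "t \<le> 1"
  shows barycentric_convex_combination: "barycentric (\<lambda>a. (1 - t) * f a + t * g a)"
    and supp_convex_combination: "supp (\<lambda>a. (1 - t) * f a + t * g a) \<subseteq> supp f \<union> supp g"
proof -
  let ?h = "\<lambda>a. (1 - t) * f a + t * g a"
  let ?S = "supp f \<union> supp g"
  show sub: "supp ?h \<subseteq> ?S" by (auto simp: supp_def)
  have fin: "finite ?S" using f g by (auto simp: barycentric_def)
  have "sum ?h (supp ?h) = sum ?h ?S" using sum_supp_superset[OF fin sub] by simp
  also have "\<dots> = (1 - t) * sum f ?S + t * sum g ?S"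
    by (simp add: sum.distrib sum_distrib_left)
  also have "sum f ?S = 1" using f fin by (subst sum_supp_superset) (auto simp: barycentric_def)
  also have "sum g ?S = 1" using g fin by (subst sum_supp_superset) (auto simp: barycentric_def)
  finally have "sum ?h (supp ?h) = 1" by simp
  moreover have "\<forall>x. 0 \<le> ?h x" using f g t by (auto simp: barycentric_def)
  ultimately show "barycentric ?h"
    unfolding barycentric_def using finite_subset[OF sub fin] by blast
qed

lemma convex_combination_in_realization:
  assumes "downward_closed K" "supp f \<union> supp g \<in> K" "barycentric f" "barycentric g" "0 \<le> t" "t \<le> 1"
  shows "(\<lambda>a. (1 - t) * f a + t * g a) \<in> realization K"
proof -
  have "supp (\<lambda>a. (1 - t) * f a + t * g a) \<in> K"
    using supp_convex_combination[OF assms(3-6)] assms(1,2) unfolding downward_closed_def by blast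
  then show ?thesis using barycentric_convex_combination[OF assms(3-6)] by (simp add: realization_iff)
qed

lemma continuous_map_fst_real:
  "continuous_map (prod_topology (top_of_set (S :: real set)) T) euclideanreal fst"
  using continuous_map_fst[of "top_of_set S" T] by (simp add: continuous_map_in_subtopology)

lemma straight_line_homotopic:
  assumes K: "downward_closed K"
    and f: "continuous_map T (realization_top K) f"
    and g: "continuous_map T (realization_top K) g"
    and face: "\<And>x. x \<in> topspace T \<Longrightarrow> supp (f x) \<union> supp (g x) \<in> K"
  shows "homotopic_with (\<lambda>_. True) T (realization_top K) f g"
  unfolding homotopic_with_def
proof (intro exI conjI allI ballI)
  let ?I = "top_of_set {0..1::real}"
  let ?h = "\<lambda>(t::real, x). (\<lambda>a. (1 - t) * f x a + t * g x a)"
  show "continuous_map (prod_topology ?I T) (realization_top K) ?h"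
    unfolding continuous_map_realization_top_iff
  proof (intro conjI ballI allI)
    fix p assume "p \<in> topspace (prod_topology ?I T)"
    then obtain t x where p: "p = (t, x)" "t \<in> {0..1}" "x \<in> topspace T" by auto
    have "f x \<in> realization K" "g x \<in> realization K"
      using continuous_map_funspace[OF f] continuous_map_funspace[OF g] p(3) by auto
    then have "(\<lambda>a. (1 - t) * f x a + t * g x a) \<in> realization K"
      using p by (intro convex_combination_in_realization[OF K face[OF p(3)]])
                 (simp_all add: realization_iff)
    then show "?h p \<in> realization K" using p by simp
  next
    fix a
    have "continuous_map (prod_topology ?I T) euclideanreal
            (\<lambda>p. (1 - fst p) * f (snd p) a + fst p * g (snd p) a)"
      by (intro continuous_intros continuous_map_fst_real
            continuous_map_compose[OF continuous_map_snd, unfolded o_def]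
            continuous_map_realization_coordinate[OF f] continuous_map_realization_coordinate[OF g])
    then show "continuous_map (prod_topology ?I T) euclideanreal (\<lambda>p. ?h p a)"
      by (simp add: case_prod_beta)
  qed
qed simp_all

lemma supp_indicator [simp]: "supp (indicator {u}) = {u}"
  by (auto simp: supp_def indicator_def)

lemma barycentric_indicator [simp]: "barycentric (indicator {u})"
  by (simp add: barycentric_def)

lemma cone_k_connected:
  assumes K: "downward_closed K" and apex: "{u} \<in> K" and cone: "\<And>\<tau>. \<tau> \<in> K \<Longrightarrow> insert u \<tau> \<in> K"
  shows "k_connected k (realization_top K)"
proof -
  have u: "indicator {u} \<in> realization K"
    using apex by (simp add: realization_iff)
  have "homotopic_with (\<lambda>_. True) T (realization_top K) f (\<lambda>_. indicator {u})"
    if f: "continuous_map T (realization_top K) f" for T :: "'c topology" and f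
  proof (rule straight_line_homotopic[OF K f])
    show "continuous_map T (realization_top K) (\<lambda>_. indicator {u})"
      using u by simp
    fix x assume "x \<in> topspace T"
    then have "supp (f x) \<in> K"
      using continuous_map_funspace[OF f] by (auto simp: realization_iff)
    then show "supp (f x) \<union> supp (indicator {u}) \<in> K" using cone by simp
  qed
  then show ?thesis
    unfolding k_connected_def using u by auto
qed

definition nullhomotopic_maps :: "'c topology \<Rightarrow> 'd topology \<Rightarrow> bool" where
  "nullhomotopic_maps T Y \<longleftrightarrow> (\<forall>f. continuous_map T Y f \<longrightarrow> (\<exists>c. homotopic_with (\<lambda>_. True) T Y f (\<lambda>_. c)))"

lemma k_connected_iff:
  "k_connected k Y \<longleftrightarrow>
    (k \<ge> -1 \<longrightarrow> topspace Y \<noteq> {}) \<and> (\<forall>i::nat. int i \<le> k \<longrightarrow> nullhomotopic_maps (nsphere i) Y)"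
  unfolding k_connected_def nullhomotopic_maps_def by blast

lemma nullhomotopic_through_homeomorphism:
  assumes hm: "homeomorphic_maps T S F G" and f: "continuous_map S Y f"
    and h: "homotopic_with (\<lambda>_. True) T Y (f \<circ> F) (\<lambda>_. c)"
  shows "homotopic_with (\<lambda>_. True) S Y f (\<lambda>_. c)"
proof -
  have G: "continuous_map S T G" using hm by (simp add: homeomorphic_maps_def)
  have "homotopic_with (\<lambda>_. True) S Y ((f \<circ> F) \<circ> G) ((\<lambda>_. c) \<circ> G)"
    by (rule homotopic_with_compose_continuous_map_right[OF h G]) simp
  then show ?thesis
    by (rule homotopic_with_eq) (use hm in \<open>auto simp: homeomorphic_maps_def\<close>)
qed

lemma nullhomotopic_maps_homeomorphic:
  assumes "T homeomorphic_space S" and T: "nullhomotopic_maps T Y"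
  shows "nullhomotopic_maps S Y"
  unfolding nullhomotopic_maps_def
proof (intro allI impI)
  obtain F G where hm: "homeomorphic_maps T S F G"
    using assms(1) unfolding homeomorphic_space_def by blast
  fix f assume f: "continuous_map S Y f"
  have "continuous_map T S F" using hm by (simp add: homeomorphic_maps_def)
  then obtain c where "homotopic_with (\<lambda>_. True) T Y (f \<circ> F) (\<lambda>_. c)"
    using T continuous_map_compose[OF _ f] unfolding nullhomotopic_maps_def by blast
  then show "\<exists>c. homotopic_with (\<lambda>_. True) S Y f (\<lambda>_. c)"
    using nullhomotopic_through_homeomorphism[OF hm f] by blast
qed

section \<open>Cubes and spheres\<close>

abbreviation powertop_on :: "('b \<Rightarrow> real) set \<Rightarrow> ('b \<Rightarrow> real) topology" where
  "powertop_on S \<equiv> subtopology (powertop_real UNIV) S"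

definition cube :: "(nat \<Rightarrow> real) \<Rightarrow> real \<Rightarrow> nat set \<Rightarrow> (nat \<Rightarrow> real) set" where
  "cube c r J = {x. \<forall>j. if j \<in> J then \<bar>x j - c j\<bar> \<le> r else x j = c j}"

definition cube_boundary :: "(nat \<Rightarrow> real) \<Rightarrow> real \<Rightarrow> nat set \<Rightarrow> (nat \<Rightarrow> real) set" where
  "cube_boundary c r J = {x \<in> cube c r J. \<exists>j\<in>J. \<bar>x j - c j\<bar> = r}"

lemma continuous_map_powertop_on_coordinate:
  "continuous_map (powertop_on S) euclideanreal (\<lambda>x. x j)"
  by (intro continuous_map_from_subtopology continuous_map_product_projection) auto

lemma continuous_map_snd_coordinate:
  "continuous_map (prod_topology X (powertop_on S)) euclideanreal (\<lambda>p. snd p j)"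
  using continuous_map_compose[OF continuous_map_snd continuous_map_powertop_on_coordinate]
  by (simp add: o_def)

lemma cube_boundary_subset_cube: "cube_boundary c r J \<subseteq> cube c r J"
  by (auto simp: cube_boundary_def)

lemma Hausdorff_space_powertop_real: "Hausdorff_space (powertop_real (UNIV::'b set))"
  by (simp add: Hausdorff_space_product_topology)

lemma cube_PiE: "cube c r J = PiE UNIV (\<lambda>j. if j \<in> J then {c j - r..c j + r} else {c j})"
  unfolding cube_def by (auto simp: PiE_iff abs_le_iff split: if_splits; force)

lemma compactin_cube: "compactin (powertop_real UNIV) (cube c r J)"
  unfolding cube_PiE compactin_PiE by auto

lemma closedin_coordinate_distance:
  "closedin (powertop_real UNIV) {x::'b\<Rightarrow>real. \<bar>x j - c\<bar> = r}"
proof -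
  have "closedin (powertop_real UNIV) {x \<in> topspace (powertop_real (UNIV::'b set)). \<bar>x j - c\<bar> \<in> {r}}"
    by (rule closedin_continuous_map_preimage[where Y=euclideanreal])
       (auto intro!: continuous_intros continuous_map_product_projection)
  then show ?thesis by simp
qed

lemma closedin_cube_boundary:
  assumes "finite J" shows "closedin (powertop_real UNIV) (cube_boundary c r J)"
proof -
  have "cube_boundary c r J = cube c r J \<inter> (\<Union>j\<in>J. {x. \<bar>x j - c j\<bar> = r})"
    by (auto simp: cube_boundary_def)
  moreover have "closedin (powertop_real UNIV) (cube c r J)"
    by (rule compactin_imp_closedin[OF Hausdorff_space_powertop_real compactin_cube])
  moreover have "closedin (powertop_real UNIV) (\<Union>j\<in>J. {x. \<bar>x j - c j\<bar> = r})"
    using assms by (intro closedin_Union) (auto intro: closedin_coordinate_distance)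
  ultimately show ?thesis by auto
qed

lemma compact_space_cube_boundary: "finite J \<Longrightarrow> compact_space (powertop_on (cube_boundary c r J))"
  by (intro compact_space_subtopology closed_compactin[OF compactin_cube cube_boundary_subset_cube]
      closedin_cube_boundary)

lemma topspace_nsphere: "topspace (nsphere d) = {x. (\<Sum>i\<le>d. x i ^ 2) = 1 \<and> (\<forall>i>d. x i = 0)}"
  by (simp add: nsphere)

definition cube_norm :: "(nat \<Rightarrow> real) \<Rightarrow> (nat \<Rightarrow> nat) \<Rightarrow> nat \<Rightarrow> (nat \<Rightarrow> real) \<Rightarrow> real" where
  "cube_norm c e d x = sqrt (\<Sum>k\<le>d. (x (e k) - c (e k))^2)"

text \<open>Radial projection from the centre \<open>c\<close> to the unit sphere, with the directions in
  \<open>J\<close> enumerated by \<open>e :: {..d} \<Rightarrow> J\<close>.\<close>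

definition sphere_projection :: "(nat \<Rightarrow> real) \<Rightarrow> (nat \<Rightarrow> nat) \<Rightarrow> nat \<Rightarrow> (nat \<Rightarrow> real) \<Rightarrow> (nat \<Rightarrow> real)" where
  "sphere_projection c e d x = (\<lambda>i. if i \<le> d then (x (e i) - c (e i)) / cube_norm c e d x else 0)"

lemma cube_norm_pos:
  assumes e: "bij_betw e {..d} J" and x: "x \<in> cube_boundary c r J" and r: "r > 0"
  shows "cube_norm c e d x > 0"
proof -
  obtain j where j: "j \<in> J" "\<bar>x j - c j\<bar> = r" using x by (auto simp: cube_boundary_def)
  then obtain k where k: "k \<le> d" "e k = j" using e by (auto simp: bij_betw_def)
  have "0 < (x (e k) - c (e k))^2" using j k r by auto
  also have "\<dots> \<le> (\<Sum>k\<le>d. (x (e k) - c (e k))^2)"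
    using k by (intro member_le_sum) auto
  finally show ?thesis unfolding cube_norm_def by simp
qed

lemma sum_squares_sphere_projection:
  assumes "cube_norm c e d x > 0"
  shows "(\<Sum>i\<le>d. (sphere_projection c e d x i)^2) = 1"
proof -
  let ?S = "\<Sum>k\<le>d. (x (e k) - c (e k))^2"
  have S: "?S > 0"
    using assms unfolding cube_norm_def
    by (metis real_sqrt_gt_0_iff sum_nonneg zero_le_power2 order_le_less)
  have "(\<Sum>i\<le>d. (sphere_projection c e d x i)^2) = (\<Sum>i\<le>d. (x (e i) - c (e i))^2 / ?S)"
    unfolding sphere_projection_def cube_norm_def using S by (intro sum.cong) (auto simp: power_divide)
  also have "\<dots> = ?S / ?S" by (simp only: sum_divide_distrib)
  finally show ?thesis using S by simp
qed

lemma continuous_map_sphere_projection: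
  assumes e: "bij_betw e {..d} J" and r: "r > 0"
  shows "continuous_map (powertop_on (cube_boundary c r J)) (nsphere d) (sphere_projection c e d)"
  unfolding nsphere continuous_map_in_subtopology
proof
  let ?B = "powertop_on (cube_boundary c r J)"
  have "sqrt (\<Sum>k\<le>d. (x (e k) - c (e k))^2) \<noteq> 0" if "x \<in> cube_boundary c r J" for x
    using cube_norm_pos[OF e that r] unfolding cube_norm_def by linarith
  then have "continuous_map ?B euclideanreal (\<lambda>x. (x (e i) - c (e i)) / cube_norm c e d x)" for i
    unfolding cube_norm_def
    by (intro continuous_intros continuous_map_powertop_on_coordinate) auto
  then show "continuous_map ?B (powertop_real UNIV) (sphere_projection c e d)"
    unfolding continuous_map_componentwise_UNIV sphere_projection_def by simp
  show "sphere_projection c e d \<in> topspace ?B \<rightarrow> {x. (\<Sum>i\<le>d. x i ^ 2) = 1 \<and> (\<forall>i>d. x i = 0)}"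
    using sum_squares_sphere_projection cube_norm_pos[OF e _ r] by (auto simp: sphere_projection_def)
qed

lemma inj_on_sphere_projection:
  assumes e: "bij_betw e {..d} J" and r: "r > 0"
  shows "inj_on (sphere_projection c e d) (cube_boundary c r J)"
proof
  fix x x' assume x: "x \<in> cube_boundary c r J" and x': "x' \<in> cube_boundary c r J"
    and eq: "sphere_projection c e d x = sphere_projection c e d x'"
  define N where "N = cube_norm c e d x"
  define N' where "N' = cube_norm c e d x'"
  have N: "N > 0" and N': "N' > 0"
    using cube_norm_pos[OF e x r] cube_norm_pos[OF e x' r] by (auto simp: N_def N'_def)
  have k: "(x (e k) - c (e k)) / N = (x' (e k) - c (e k)) / N'" if "k \<le> d" for k
    using fun_cong[OF eq, of k] that by (simp add: sphere_projection_def N_def N'_def)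
  have a: "x (e k) - c (e k) = (N / N') * (x' (e k) - c (e k))" if "k \<le> d" for k
    using k[OF that] N N' by (simp add: field_simps)
  have b: "x' (e k) - c (e k) = (N' / N) * (x (e k) - c (e k))" if "k \<le> d" for k
    using k[OF that] N N' by (simp add: field_simps)
  have inJ: "e k \<in> J" if "k \<le> d" for k using e that by (auto simp: bij_betw_def)
  have bx: "\<bar>x (e k) - c (e k)\<bar> \<le> r" if "k \<le> d" for k
    using x inJ[OF that] by (auto simp: cube_boundary_def cube_def)
  have bx': "\<bar>x' (e k) - c (e k)\<bar> \<le> r" if "k \<le> d" for k
    using x' inJ[OF that] by (auto simp: cube_boundary_def cube_def)
  obtain j where j: "j \<in> J" "\<bar>x j - c j\<bar> = r" using x by (auto simp: cube_boundary_def)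
  obtain j' where j': "j' \<in> J" "\<bar>x' j' - c j'\<bar> = r" using x' by (auto simp: cube_boundary_def)
  obtain k0 where k0: "k0 \<le> d" "e k0 = j" using e j(1) by (auto simp: bij_betw_def)
  obtain k0' where k0': "k0' \<le> d" "e k0' = j'" using e j'(1) by (auto simp: bij_betw_def)
  have "N / N' * r \<le> r"
    using a[OF k0'(1)] k0' j' N N' bx[OF k0'(1)] by (simp add: abs_mult)
  then have "N / N' \<le> 1" using r mult_le_cancel_right2[of "N / N'" r] by blast
  moreover have "N' / N * r \<le> r"
    using b[OF k0(1)] k0 j N N' bx'[OF k0(1)] by (simp add: abs_mult)
  then have "N' / N \<le> 1" using r mult_le_cancel_right2[of "N' / N" r] by blast
  ultimately have "N = N'" using N N' by (simp add: divide_le_eq_1)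
  then have xe: "x (e k) = x' (e k)" if "k \<le> d" for k using a[OF that] N' by simp
  show "x = x'"
  proof
    fix j show "x j = x' j"
    proof (cases "j \<in> J")
      case True
      then obtain k where "k \<le> d" "e k = j" using e by (auto simp: bij_betw_def)
      then show ?thesis using xe by auto
    next
      case False
      then show ?thesis using x x' by (auto simp: cube_boundary_def cube_def)
    qed
  qed
qed

lemma sphere_projection_onto:
  assumes e: "bij_betw e {..d} J" and r: "r > 0" and y: "y \<in> topspace (nsphere d)"
  shows "y \<in> sphere_projection c e d ` cube_boundary c r J"
proof -
  have ysum: "(\<Sum>i\<le>d. y i ^ 2) = 1" and yz: "\<And>i. i > d \<Longrightarrow> y i = 0"
    using y by (auto simp: topspace_nsphere)
  define m where "m = Max ((\<lambda>k. \<bar>y k\<bar>) ` {..d})"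
  have mge: "\<bar>y k\<bar> \<le> m" if "k \<le> d" for k unfolding m_def using that by (intro Max_ge) auto
  have "m \<in> (\<lambda>k. \<bar>y k\<bar>) ` {..d}" unfolding m_def by (rule Max_in) auto
  then obtain k0 where k0: "k0 \<le> d" "\<bar>y k0\<bar> = m" by auto
  have "m > 0"
  proof (rule ccontr)
    assume "\<not> m > 0"
    then have "\<And>k. k \<le> d \<Longrightarrow> y k = 0"
      using mge by (metis abs_ge_zero abs_le_zero_iff order_trans not_less)
    then have "(\<Sum>i\<le>d. y i ^ 2) = 0" by simp
    then show False using ysum by simp
  qed
  define e' where "e' = inv_into {..d} e"
  have e'e: "e' (e k) = k" if "k \<le> d" for k
    using e that unfolding e'_def bij_betw_def by (simp add: inv_into_f_f)
  have inJ: "e k \<in> J" if "k \<le> d" for k using e that by (auto simp: bij_betw_def)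
  define x where "x = (\<lambda>j. if j \<in> J then c j + r * y (e' j) / m else c j)"
  have xe: "x (e k) - c (e k) = r * y k / m" if "k \<le> d" for k
    using that inJ e'e by (simp add: x_def)
  have "x \<in> cube c r J"
    unfolding cube_def
  proof (intro CollectI allI)
    fix j show "if j \<in> J then \<bar>x j - c j\<bar> \<le> r else x j = c j"
    proof (cases "j \<in> J")
      case True
      then obtain k where k: "k \<le> d" "e k = j" using e by (auto simp: bij_betw_def)
      have "\<bar>r * y k / m\<bar> \<le> r" using mge[OF k(1)] r \<open>m > 0\<close>
        by (simp add: abs_mult abs_divide divide_le_eq mult_left_mono)
      then show ?thesis using True xe[OF k(1)] k by simp
    qed (simp add: x_def)
  qed
  moreover have "\<bar>x (e k0) - c (e k0)\<bar> = r"
    using xe[OF k0(1)] k0 r \<open>m > 0\<close> by (simp add: abs_mult abs_divide)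
  ultimately have xc: "x \<in> cube_boundary c r J" unfolding cube_boundary_def using inJ[OF k0(1)] by blast
  have "cube_norm c e d x = sqrt (\<Sum>k\<le>d. (r / m)^2 * (y k)^2)"
    unfolding cube_norm_def
    by (intro arg_cong[where f=sqrt] sum.cong) (auto simp: xe power_mult_distrib power_divide)
  also have "\<dots> = r / m" using ysum r \<open>m > 0\<close> by (simp add: sum_distrib_left[symmetric])
  finally have nx: "cube_norm c e d x = r / m" .
  have "sphere_projection c e d x = y"
  proof
    fix i show "sphere_projection c e d x i = y i"
      using nx xe[of i] yz[of i] r \<open>m > 0\<close> by (auto simp: sphere_projection_def)
  qed
  then show ?thesis using xc by blast
qed

lemma Hausdorff_nsphere: "Hausdorff_space (nsphere d)"
  unfolding nsphere by (intro Hausdorff_space_subtopology Hausdorff_space_powertop_real)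

lemma homeomorphic_map_sphere_projection:
  assumes e: "bij_betw e {..d} J" and r: "r > 0"
  shows "homeomorphic_map (powertop_on (cube_boundary c r J)) (nsphere d) (sphere_projection c e d)"
proof (rule continuous_imp_homeomorphic_map[OF continuous_map_sphere_projection[OF e r]
      compact_space_cube_boundary Hausdorff_nsphere])
  show "finite J" using e bij_betw_finite by blast
  show "sphere_projection c e d ` topspace (powertop_on (cube_boundary c r J)) = topspace (nsphere d)"
    using sphere_projection_onto[OF e r, where c=c]
      continuous_map_image_subset_topspace[OF continuous_map_sphere_projection[OF e r, where c=c]]
    by auto
  show "inj_on (sphere_projection c e d) (topspace (powertop_on (cube_boundary c r J)))"
    using inj_on_sphere_projection[OF e r] by simp
qed

text \<open>Exhibits the cube as the cone over its boundary: only the end \<open>t = 1\<close> is collapsed,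
  to the centre.\<close>

definition cone_contraction :: "(nat \<Rightarrow> real) \<Rightarrow> real \<times> (nat \<Rightarrow> real) \<Rightarrow> (nat \<Rightarrow> real)" where
  "cone_contraction c p = (\<lambda>j. c j + (1 - fst p) * (snd p j - c j))"

lemma cone_contraction_eq:
  assumes y: "y \<in> cube_boundary c r J" and y': "y' \<in> cube_boundary c r J"
    and t: "t \<in> {0..1}" and t': "t' \<in> {0..1}"
    and r: "r > 0" and eq: "cone_contraction c (t, y) = cone_contraction c (t', y')"
  shows "t = t' \<and> (t = 1 \<or> y = y')"
proof -
  have eqj: "(1 - t) * (y j - c j) = (1 - t') * (y' j - c j)" for j
    using fun_cong[OF eq, of j] by (simp add: cone_contraction_def)
  have le: "1 - t \<le> 1 - t'"
    if y: "y \<in> cube_boundary c r J" and y': "y' \<in> cube_boundary c r J" and t': "t' \<in> {0..1}"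
    and eqj: "\<And>j. (1 - t) * (y j - c j) = (1 - t') * (y' j - c j)"
    for t t' y y'
  proof -
    obtain j where j: "j \<in> J" "\<bar>y j - c j\<bar> = r" using y by (auto simp: cube_boundary_def)
    have b: "\<bar>y' j - c j\<bar> \<le> r" using y' j(1) by (auto simp: cube_boundary_def cube_def)
    have "\<bar>1 - t\<bar> * r = \<bar>(1 - t) * (y j - c j)\<bar>" using j by (simp add: abs_mult)
    also have "\<dots> = \<bar>(1 - t') * (y' j - c j)\<bar>" by (simp only: eqj)
    also have "\<dots> = (1 - t') * \<bar>y' j - c j\<bar>" using t' by (simp add: abs_mult)
    also have "\<dots> \<le> (1 - t') * r" using t' b by (intro mult_left_mono) auto
    finally have "\<bar>1 - t\<bar> * r \<le> (1 - t') * r" .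
    then have "\<bar>1 - t\<bar> \<le> 1 - t'" using r by simp
    then show ?thesis by linarith
  qed
  have "1 - t \<le> 1 - t'" by (rule le[OF y y' t' eqj])
  moreover have "1 - t' \<le> 1 - t" by (rule le[OF y' y t]) (use eqj in simp)
  ultimately have tt: "t = t'" by simp
  moreover have "t = 1 \<or> y = y'"
  proof (cases "t = 1")
    case False
    then have "y j = y' j" for j using eqj[of j] tt by simp
    then show ?thesis by auto
  qed simp
  ultimately show ?thesis by simp
qed

lemma cone_contraction_in_cube:
  assumes "t \<in> {0..1}" "y \<in> cube_boundary c r J"
  shows "cone_contraction c (t, y) \<in> cube c r J"
  unfolding cube_def
proof (intro CollectI allI)
  fix j
  show "if j \<in> J then \<bar>cone_contraction c (t, y) j - c j\<bar> \<le> r else cone_contraction c (t, y) j = c j"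
  proof (cases "j \<in> J")
    case True
    have b: "\<bar>y j - c j\<bar> \<le> r" using assms True by (auto simp: cube_boundary_def cube_def)
    have "\<bar>(1 - t) * (y j - c j)\<bar> = (1 - t) * \<bar>y j - c j\<bar>" using assms by (simp add: abs_mult)
    also have "\<dots> \<le> 1 * \<bar>y j - c j\<bar>" using assms by (intro mult_right_mono) auto
    finally show ?thesis using True b by (simp add: cone_contraction_def)
  next
    case False
    then show ?thesis using assms by (auto simp: cone_contraction_def cube_boundary_def cube_def)
  qed
qed

lemma continuous_map_cone_contraction:
  "continuous_map (prod_topology (top_of_set {0..1}) (powertop_on (cube_boundary c r J)))
    (powertop_on (cube c r J)) (cone_contraction c)"
  unfolding continuous_map_in_subtopology
proof
  show "continuous_map (prod_topology (top_of_set {0..1}) (powertop_on (cube_boundary c r J)))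
      (powertop_real UNIV) (cone_contraction c)"
    unfolding continuous_map_componentwise_UNIV cone_contraction_def
    by (intro allI continuous_intros continuous_map_fst_real continuous_map_snd_coordinate)
  show "cone_contraction c
      \<in> topspace (prod_topology (top_of_set {0..1}) (powertop_on (cube_boundary c r J))) \<rightarrow> cube c r J"
    using cone_contraction_in_cube by auto
qed

lemma cone_contraction_onto:
  assumes J: "finite J" "J \<noteq> {}" and r: "r > 0" and x: "x \<in> cube c r J"
  shows "\<exists>t y. t \<in> {0..1} \<and> y \<in> cube_boundary c r J \<and> cone_contraction c (t, y) = x"
proof (cases "x = c")
  case True
  obtain j0 where j0: "j0 \<in> J" using J by auto
  define y where "y = (\<lambda>j. if j = j0 then c j + r else c j)"
  have "y \<in> cube_boundary c r J" using j0 r unfolding cube_boundary_def cube_def y_def by auto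
  moreover have "cone_contraction c (1, y) = x" using True by (simp add: cone_contraction_def)
  moreover have "(1::real) \<in> {0..1}" by simp
  ultimately show ?thesis by blast
next
  case False
  define m where "m = Max ((\<lambda>j. \<bar>x j - c j\<bar>) ` J)"
  have mge: "\<bar>x j - c j\<bar> \<le> m" if "j \<in> J" for j unfolding m_def using that J by (intro Max_ge) auto
  have "m \<in> (\<lambda>j. \<bar>x j - c j\<bar>) ` J" unfolding m_def using J by (intro Max_in) auto
  then obtain j0 where j0: "j0 \<in> J" "\<bar>x j0 - c j0\<bar> = m" by auto
  have offJ: "x j = c j" if "j \<notin> J" for j using x that by (auto simp: cube_def)
  obtain j1 where j1: "x j1 \<noteq> c j1" using False by auto
  then have "j1 \<in> J" using offJ by auto
  then have mpos: "m > 0" using mge[of j1] j1 by auto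
  have mler: "m \<le> r" using x j0 by (auto simp: cube_def)
  define y where "y = (\<lambda>j. c j + (r / m) * (x j - c j))"
  have "y \<in> cube c r J"
    unfolding cube_def
  proof (intro CollectI allI)
    fix j show "if j \<in> J then \<bar>y j - c j\<bar> \<le> r else y j = c j"
    proof (cases "j \<in> J")
      case True
      have "\<bar>y j - c j\<bar> = (r / m) * \<bar>x j - c j\<bar>" using r mpos by (simp add: y_def abs_mult)
      also have "\<dots> \<le> (r / m) * m" using mge[OF True] r mpos by (intro mult_left_mono) auto
      also have "\<dots> = r" using mpos by simp
      finally show ?thesis using True by simp
    qed (simp add: y_def offJ)
  qed
  moreover have "\<bar>y j0 - c j0\<bar> = r" using j0 r mpos by (simp add: y_def abs_mult)
  ultimately have yc: "y \<in> cube_boundary c r J" using j0 unfolding cube_boundary_def by blast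
  have "cone_contraction c (1 - m / r, y) = x"
    unfolding cone_contraction_def y_def using r mpos by (auto simp: field_simps)
  moreover have "1 - m / r \<in> {0..1}" using mpos mler r by (auto simp: field_simps)
  ultimately show ?thesis using yc by blast
qed

lemma cube_extension_of_nullhomotopic:
  assumes J: "finite J" "J \<noteq> {}" and r: "r > 0"
    and hom: "homotopic_with (\<lambda>_. True) (powertop_on (cube_boundary c r J)) Y h (\<lambda>_. a)"
  obtains g where "continuous_map (powertop_on (cube c r J)) Y g"
    and "\<And>x. x \<in> cube_boundary c r J \<Longrightarrow> g x = h x"
proof -
  let ?D = "prod_topology (top_of_set {0..1::real}) (powertop_on (cube_boundary c r J))"
  obtain H where H: "continuous_map ?D Y H" "\<And>x. H (0, x) = h x" "\<And>x. H (1, x) = a"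
    using hom unfolding homotopic_with_def by auto
  have "compact_space (top_of_set {0..1::real})"
    using compact_space_subtopology[of euclideanreal "{0..1::real}"] by simp
  then have "compact_space ?D"
    using compact_space_cube_boundary[OF J(1)] by (simp add: compact_space_prod_topology)
  moreover have "Hausdorff_space (powertop_on (cube c r J))"
    by (intro Hausdorff_space_subtopology Hausdorff_space_powertop_real)
  ultimately have "closed_map ?D (powertop_on (cube c r J)) (cone_contraction c)"
    by (rule continuous_imp_closed_map[OF continuous_map_cone_contraction])
  moreover have "cone_contraction c ` topspace ?D = topspace (powertop_on (cube c r J))"
  proof
    show "cone_contraction c ` topspace ?D \<subseteq> topspace (powertop_on (cube c r J))"
      using continuous_map_image_subset_topspace[OF continuous_map_cone_contraction] .
    show "topspace (powertop_on (cube c r J)) \<subseteq> cone_contraction c ` topspace ?D"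
      using cone_contraction_onto[OF J r] by force
  qed
  ultimately have "quotient_map ?D (powertop_on (cube c r J)) (cone_contraction c)"
    using continuous_closed_quotient_map[OF continuous_map_cone_contraction] by simp
  then obtain g where g: "continuous_map (powertop_on (cube c r J)) Y g"
    and gH: "\<And>p. p \<in> topspace ?D \<Longrightarrow> g (cone_contraction c p) = H p"
  proof (rule quotient_map_lift_exists[OF _ H(1)])
    fix p p' assume p: "p \<in> topspace ?D" and p': "p' \<in> topspace ?D"
      and eq: "cone_contraction c p = cone_contraction c p'"
    obtain t y t' y' where tt: "p = (t, y)" "p' = (t', y')" by (cases p, cases p')
    have "t = t' \<and> (t = 1 \<or> y = y')"
      using p p' eq unfolding tt by (intro cone_contraction_eq[OF _ _ _ _ r]) auto
    then show "H p = H p'" using H(3) tt by auto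
  qed blast
  show thesis
  proof (rule that[OF g])
    fix x assume "x \<in> cube_boundary c r J"
    then show "g x = h x" using gH[of "(0, x)"] H(2) by (simp add: cone_contraction_def)
  qed
qed

lemma nsphere_homeomorphic_cube_boundary:
  assumes J: "finite J" "card J = Suc d" and r: "r > 0"
  shows "nsphere d homeomorphic_space powertop_on (cube_boundary c r J)"
proof -
  obtain e where "bij_betw e {0..<card J} J" using ex_bij_betw_nat_finite[OF J(1)] by blast
  moreover have "{0..<card J} = {..d}" using J(2) by auto
  ultimately have "bij_betw e {..d} J" by simp
  then have "homeomorphic_map (powertop_on (cube_boundary c r J)) (nsphere d) (sphere_projection c e d)"
    by (rule homeomorphic_map_sphere_projection[OF _ r])
  then have "powertop_on (cube_boundary c r J) homeomorphic_space nsphere d"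
    unfolding homeomorphic_space by blast
  then show ?thesis by (rule homeomorphic_space_sym[THEN iffD1])
qed

lemma cube_extension:
  assumes J: "finite J" and r: "r > 0" and Y: "topspace Y \<noteq> {}"
    and null: "J \<noteq> {} \<Longrightarrow> nullhomotopic_maps (nsphere (card J - 1)) Y"
    and h: "continuous_map (powertop_on (cube_boundary c r J)) Y h"
  obtains g where "continuous_map (powertop_on (cube c r J)) Y g"
    and "\<And>x. x \<in> cube_boundary c r J \<Longrightarrow> g x = h x"
proof (cases "J = {}")
  case True
  obtain y where "y \<in> topspace Y" using Y by blast
  show thesis
    by (rule that[of "\<lambda>_. y"]) (use \<open>y \<in> topspace Y\<close> True in \<open>simp_all add: cube_boundary_def\<close>)
next
  case False
  have "nsphere (card J - 1) homeomorphic_space powertop_on (cube_boundary c r J)"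
    by (rule nsphere_homeomorphic_cube_boundary[OF J _ r]) (use False J in \<open>simp add: card_gt_0_iff\<close>)
  then have "nullhomotopic_maps (powertop_on (cube_boundary c r J)) Y"
    using null[OF False] by (rule nullhomotopic_maps_homeomorphic)
  then obtain a where hom: "homotopic_with (\<lambda>_. True) (powertop_on (cube_boundary c r J)) Y h (\<lambda>_. a)"
    using h unfolding nullhomotopic_maps_def by blast
  show thesis by (rule cube_extension_of_nullhomotopic[OF J False r hom that])
qed

section \<open>Cubical complexes\<close>

definition grid_cell :: "(nat \<Rightarrow> int) \<Rightarrow> nat set \<Rightarrow> (nat \<Rightarrow> real) set" where
  "grid_cell z J =
    {x. \<forall>j. if j \<in> J then of_int (z j) \<le> x j \<and> x j \<le> of_int (z j) + 1 else x j = of_int (z j)}"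

definition grid_center :: "(nat \<Rightarrow> int) \<Rightarrow> nat set \<Rightarrow> (nat \<Rightarrow> real)" where
  "grid_center z J = (\<lambda>j. of_int (z j) + (if j \<in> J then 1/2 else 0))"

lemma grid_cell_eq_cube: "grid_cell z J = cube (grid_center z J) (1/2) J"
  unfolding grid_cell_def cube_def grid_center_def
  by (rule Collect_cong, rule all_cong1) (auto simp: abs_if split: if_splits)

lemma grid_center_in_grid_cell: "grid_center z J \<in> grid_cell z J"
  by (auto simp: grid_cell_def grid_center_def)

lemma of_int_eq_if_between:
  fixes a b :: int and x :: real
  assumes "of_int a \<le> x" "x \<le> of_int a + 1" "of_int b < x" "x < of_int b + 1"
  shows "a = b"
proof -
  have "(of_int a :: real) < of_int (b + 1)" using assms by simp
  then have "a < b + 1" by (simp only: of_int_less_iff)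
  moreover have "(of_int b :: real) < of_int (a + 1)" using assms by simp
  then have "b < a + 1" by (simp only: of_int_less_iff)
  ultimately show ?thesis by simp
qed

lemma of_int_neq_half_integer: "of_int a \<noteq> (of_int b + 1/2 :: real)"
proof
  assume "of_int a = (of_int b + 1/2 :: real)"
  then have "2 * of_int a = (2 * of_int b + 1 :: real)" by simp
  then have "2 * a = 2 * b + 1" by (metis of_int_eq_iff of_int_add of_int_mult of_int_1 of_int_numeral)
  then show False by presburger
qed

lemma subcell_directions_subset:
  assumes "grid_cell z' J' \<subseteq> grid_cell z J" shows "J' \<subseteq> J"
proof
  fix j assume j: "j \<in> J'"
  have "grid_center z' J' \<in> grid_cell z J" using assms grid_center_in_grid_cell by blast
  then have "j \<notin> J \<Longrightarrow> grid_center z' J' j = of_int (z j)" by (auto simp: grid_cell_def)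
  then show "j \<in> J" using j of_int_neq_half_integer[of "z j" "z' j"] by (force simp: grid_center_def)
qed

lemma subcell_same_directions_eq:
  assumes "grid_cell z' J' \<subseteq> grid_cell z J" "J' = J" shows "z' = z"
proof
  fix j
  have c: "grid_center z' J' \<in> grid_cell z J" using assms grid_center_in_grid_cell by blast
  show "z' j = z j"
  proof (cases "j \<in> J")
    case True
    then have "of_int (z j) \<le> of_int (z' j) + (1/2::real)"
      "of_int (z' j) + (1/2::real) \<le> of_int (z j) + 1"
      using c assms(2) by (auto simp: grid_cell_def grid_center_def split: if_splits)
    then show ?thesis by (intro of_int_eq_if_between[symmetric, of _ "of_int (z' j) + 1/2"]) auto
  next
    case False
    then show ?thesis using c assms(2) by (auto simp: grid_cell_def grid_center_def split: if_splits)
  qed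
qed

lemma card_directions_proper_subcell:
  assumes "finite J" "grid_cell z' J' \<subseteq> grid_cell z J" "(z', J') \<noteq> (z, J)"
  shows "card J' < card J"
proof -
  have "J' \<subseteq> J" by (rule subcell_directions_subset[OF assms(2)])
  moreover have "J' \<noteq> J" using subcell_same_directions_eq[OF assms(2)] assms(3) by auto
  ultimately show ?thesis using assms(1) by (simp add: psubset_card_mono)
qed

definition grid_boundary :: "(nat \<Rightarrow> int) \<Rightarrow> nat set \<Rightarrow> (nat \<Rightarrow> real) set" where
  "grid_boundary z J = cube_boundary (grid_center z J) (1/2) J"

lemma grid_boundary_iff:
  "x \<in> grid_boundary z J \<longleftrightarrow>
    x \<in> grid_cell z J \<and> (\<exists>j\<in>J. x j = of_int (z j) \<or> x j = of_int (z j) + 1)"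
proof -
  have e: "(\<bar>x j - grid_center z J j\<bar> = 1/2) \<longleftrightarrow> (x j = of_int (z j) \<or> x j = of_int (z j) + 1)"
    if "j \<in> J" for j
  proof -
    have g: "grid_center z J j = of_int (z j) + 1/2" using that by (simp add: grid_center_def)
    show ?thesis unfolding g by linarith
  qed
  have "(\<exists>j\<in>J. \<bar>x j - grid_center z J j\<bar> = 1/2) \<longleftrightarrow> (\<exists>j\<in>J. x j = of_int (z j) \<or> x j = of_int (z j) + 1)"
    by (rule bex_cong[OF refl e])
  then show ?thesis
    unfolding grid_boundary_def cube_boundary_def grid_cell_eq_cube[symmetric] mem_Collect_eq by simp
qed

lemma grid_cell_subset_of_interior_point:
  assumes x: "x \<in> grid_cell z J" "x \<notin> grid_boundary z J" and x1: "x \<in> grid_cell z1 J1"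
  shows "grid_cell z J \<subseteq> grid_cell z1 J1"
proof
  fix y assume y: "y \<in> grid_cell z J"
  have strict: "of_int (z j) < x j \<and> x j < of_int (z j) + 1" if "j \<in> J" for j
  proof -
    have "\<forall>j. if j \<in> J then of_int (z j) \<le> x j \<and> x j \<le> of_int (z j) + 1 else x j = of_int (z j)"
      using x(1) by (simp add: grid_cell_def)
    then have a: "of_int (z j) \<le> x j \<and> x j \<le> of_int (z j) + 1" using that by (metis (full_types))
    have b: "\<not> (x j = of_int (z j) \<or> x j = of_int (z j) + 1)"
      using x that by (auto simp: grid_boundary_iff)
    show ?thesis using a b by linarith
  qed
  show "y \<in> grid_cell z1 J1"
    unfolding grid_cell_def
  proof (intro CollectI allI)
    fix j
    show "if j \<in> J1 then of_int (z1 j) \<le> y j \<and> y j \<le> of_int (z1 j) + 1 else y j = of_int (z1 j)"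
    proof (cases "j \<in> J")
      case True
      note s = strict[OF True]
      have "j \<in> J1"
      proof (rule ccontr)
        assume "j \<notin> J1"
        then have "x j = of_int (z1 j)" using x1 by (auto simp: grid_cell_def)
        then have "(of_int (z j)::real) < of_int (z1 j)" "(of_int (z1 j)::real) < of_int (z j + 1)"
          using s by simp_all
        then have "z j < z1 j" "z1 j < z j + 1" by (simp_all only: of_int_less_iff)
        then show False by simp
      qed
      moreover have "z1 j = z j"
        using x1 \<open>j \<in> J1\<close> s by (intro of_int_eq_if_between[of _ "x j"]) (auto simp: grid_cell_def)
      ultimately show ?thesis using y True by (auto simp: grid_cell_def)
    next
      case False
      then have yx: "y j = x j" using x(1) y by (auto simp: grid_cell_def)
      show ?thesis using x1 yx unfolding grid_cell_def by (auto split: if_splits)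
    qed
  qed
qed

lemma grid_boundary_proper_subcell:
  assumes x: "x \<in> grid_boundary z J"
  shows "\<exists>z' J'. x \<in> grid_cell z' J' \<and> grid_cell z' J' \<subseteq> grid_cell z J \<and> (z', J') \<noteq> (z, J)"
proof -
  obtain j where j: "j \<in> J" "x j = of_int (z j) \<or> x j = of_int (z j) + 1" and xc: "x \<in> grid_cell z J"
    using x by (auto simp: grid_boundary_iff)
  define w where "w = (if x j = of_int (z j) then z j else z j + 1)"
  have xw: "x j = of_int w" using j by (auto simp: w_def)
  define z' where "z' = z(j := w)"
  have xcs: "if i \<in> J then of_int (z i) \<le> x i \<and> x i \<le> of_int (z i) + 1 else x i = of_int (z i)" for i
    using xc unfolding grid_cell_def by blast
  have "x \<in> grid_cell z' (J - {j})"
    unfolding grid_cell_def mem_Collect_eq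
  proof
    fix i
    show "if i \<in> J - {j} then of_int (z' i) \<le> x i \<and> x i \<le> of_int (z' i) + 1 else x i = of_int (z' i)"
      using xcs[of i] xw by (cases "i = j") (simp_all add: z'_def)
  qed
  moreover have "grid_cell z' (J - {j}) \<subseteq> grid_cell z J"
  proof
    fix y assume y: "y \<in> grid_cell z' (J - {j})"
    have ys: "if i \<in> J - {j} then of_int (z' i) \<le> y i \<and> y i \<le> of_int (z' i) + 1
        else y i = of_int (z' i)" for i
      using y unfolding grid_cell_def by blast
    have wz: "of_int (z j) \<le> (of_int w :: real) \<and> (of_int w :: real) \<le> of_int (z j) + 1"
      by (simp add: w_def)
    show "y \<in> grid_cell z J"
      unfolding grid_cell_def mem_Collect_eq
    proof
      fix i show "if i \<in> J then of_int (z i) \<le> y i \<and> y i \<le> of_int (z i) + 1 else y i = of_int (z i)"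
        using ys[of i] j(1) wz unfolding z'_def by (cases "i = j") auto
    qed
  qed
  moreover have "(z', J - {j}) \<noteq> (z, J)" using j by auto
  ultimately show ?thesis by blast
qed

lemma closedin_grid_cell: "closedin (powertop_real UNIV) (grid_cell z J)"
  unfolding grid_cell_eq_cube
  by (rule compactin_imp_closedin[OF Hausdorff_space_powertop_real compactin_cube])

definition grid_union :: "((nat \<Rightarrow> int) \<times> nat set) set \<Rightarrow> (nat \<Rightarrow> real) set" where
  "grid_union P = (\<Union>p\<in>P. grid_cell (fst p) (snd p))"

definition grid_complex :: "((nat \<Rightarrow> int) \<times> nat set) set \<Rightarrow> bool" where
  "grid_complex P \<longleftrightarrow> (\<forall>p\<in>P. finite (snd p) \<and>
    (\<forall>z' J'. grid_cell z' J' \<subseteq> grid_cell (fst p) (snd p) \<longrightarrow> (z', J') \<in> P))"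

lemma closedin_grid_union: "finite P \<Longrightarrow> closedin (powertop_real UNIV) (grid_union P)"
  unfolding grid_union_def by (intro closedin_Union) (auto intro: closedin_grid_cell)

lemma continuous_map_paste_closedin:
  assumes A: "closedin (powertop_real UNIV) A" and B: "closedin (powertop_real UNIV) B"
    and f: "continuous_map (powertop_on A) Y f" and g: "continuous_map (powertop_on B) Y g"
    and fg: "\<And>x. x \<in> A \<Longrightarrow> x \<in> B \<Longrightarrow> f x = g x"
  shows "continuous_map (powertop_on (A \<union> B)) Y (\<lambda>x. if x \<in> A then f x else g x)"
proof (rule pasting_lemma_closed[where I="{True, False}" and T="\<lambda>b. if b then A else B"
      and f="\<lambda>b. if b then f else g"])
  fix i :: bool assume "i \<in> {True, False}"
  show "closedin (powertop_on (A \<union> B)) (if i then A else B)"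
    using A B by (auto intro: closedin_subset_topspace)
  have "subtopology (powertop_on (A \<union> B)) A = powertop_on A"
    "subtopology (powertop_on (A \<union> B)) B = powertop_on B"
    by (auto simp: subtopology_subtopology Int_absorb1)
  then show "continuous_map (subtopology (powertop_on (A \<union> B)) (if i then A else B)) Y
      (if i then f else g)"
    using f g by auto
qed (use fg in auto)

lemma grid_complex_restrict:
  assumes "grid_complex C"
  shows "grid_complex {p \<in> C. \<forall>x\<in>grid_cell (fst p) (snd p). \<Phi> x}"
  unfolding grid_complex_def
proof (intro ballI conjI allI impI)
  fix p assume p: "p \<in> {p \<in> C. \<forall>x\<in>grid_cell (fst p) (snd p). \<Phi> x}"
  then show "finite (snd p)" using assms unfolding grid_complex_def by blast
  fix z J assume sub: "grid_cell z J \<subseteq> grid_cell (fst p) (snd p)"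
  then have "(z, J) \<in> C" using assms p unfolding grid_complex_def by blast
  then show "(z, J) \<in> {p \<in> C. \<forall>x\<in>grid_cell (fst p) (snd p). \<Phi> x}" using p sub by auto
qed

lemma grid_complex_remove_maximal:
  assumes P: "grid_complex P"
    and max: "\<And>p. p \<in> P \<Longrightarrow> grid_cell z J \<subseteq> grid_cell (fst p) (snd p) \<Longrightarrow> p = (z, J)"
  shows "grid_complex (P - {(z, J)})"
  unfolding grid_complex_def
proof (intro ballI conjI allI impI)
  fix p assume p: "p \<in> P - {(z, J)}"
  then show "finite (snd p)" using P unfolding grid_complex_def by blast
  fix z' J' assume sub: "grid_cell z' J' \<subseteq> grid_cell (fst p) (snd p)"
  then have "(z', J') \<in> P" using P p unfolding grid_complex_def by blast
  moreover have "(z', J') \<noteq> (z, J)" using max[of p] p sub by auto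
  ultimately show "(z', J') \<in> P - {(z, J)}" by simp
qed

text \<open>The boundary of a maximal cell lies in the rest of the complex, and a null-homotopy
  of the boundary sphere fills the cell.\<close>

lemma grid_extension_over_maximal_cell:
  assumes fin: "finite P" and P: "grid_complex P" and zJ: "(z, J) \<in> P"
    and max: "\<And>p. p \<in> P \<Longrightarrow> grid_cell z J \<subseteq> grid_cell (fst p) (snd p) \<Longrightarrow> p = (z, J)"
    and Y: "topspace Y \<noteq> {}" and null: "J \<noteq> {} \<Longrightarrow> nullhomotopic_maps (nsphere (card J - 1)) Y"
    and g: "continuous_map (powertop_on (grid_union (P - {(z, J)}))) Y g"
  obtains G where "continuous_map (powertop_on (grid_union P)) Y G"
    and "\<And>x. x \<in> grid_union (P - {(z, J)}) \<Longrightarrow> G x = g x"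
proof -
  let ?P' = "P - {(z, J)}"
  have fJ: "finite J" using P zJ unfolding grid_complex_def by auto
  have "grid_boundary z J \<subseteq> grid_union ?P'"
  proof
    fix x assume "x \<in> grid_boundary z J"
    from grid_boundary_proper_subcell[OF this] obtain z' J' where x: "x \<in> grid_cell z' J'"
      "grid_cell z' J' \<subseteq> grid_cell z J" "(z', J') \<noteq> (z, J)" by blast
    have "(z', J') \<in> P" using P zJ x(2) unfolding grid_complex_def by (metis fst_conv snd_conv)
    then have "(z', J') \<in> ?P'" using x(3) by blast
    then show "x \<in> grid_union ?P'" using x(1) unfolding grid_union_def by force
  qed
  then have "continuous_map (powertop_on (cube_boundary (grid_center z J) (1/2) J)) Y g"
    using continuous_map_from_subtopology_mono[OF g] unfolding grid_boundary_def by blast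
  moreover have "(0::real) < 1/2" by simp
  ultimately obtain gC where gC: "continuous_map (powertop_on (cube (grid_center z J) (1/2) J)) Y gC"
      "\<And>x. x \<in> cube_boundary (grid_center z J) (1/2) J \<Longrightarrow> gC x = g x"
    using cube_extension[OF fJ _ Y null] by metis
  have agree: "g x = gC x" if x: "x \<in> grid_union ?P'" "x \<in> grid_cell z J" for x
  proof (cases "x \<in> grid_boundary z J")
    case False
    obtain p where p: "p \<in> ?P'" "x \<in> grid_cell (fst p) (snd p)"
      using x(1) unfolding grid_union_def by blast
    then have "p = (z, J)"
      using grid_cell_subset_of_interior_point[OF x(2) False p(2)] max by blast
    then show ?thesis using p(1) by simp
  qed (simp add: gC(2) grid_boundary_def)
  have "grid_union P = grid_union ?P' \<union> grid_cell z J"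
    unfolding grid_union_def using zJ by auto
  moreover have "continuous_map (powertop_on (grid_union ?P' \<union> grid_cell z J)) Y
      (\<lambda>x. if x \<in> grid_union ?P' then g x else gC x)"
  proof (rule continuous_map_paste_closedin[OF closedin_grid_union closedin_grid_cell g])
    show "finite ?P'" using fin by simp
    show "continuous_map (powertop_on (grid_cell z J)) Y gC"
      using gC(1) by (simp add: grid_cell_eq_cube)
  qed (rule agree)
  ultimately have "continuous_map (powertop_on (grid_union P)) Y
      (\<lambda>x. if x \<in> grid_union ?P' then g x else gC x)" by simp
  then show thesis by (rule that) simp
qed

lemma grid_extension:
  assumes "finite P" "Q \<subseteq> P" "grid_complex P" "grid_complex Q" "topspace Y \<noteq> {}"
    "\<And>z J. (z, J) \<in> P \<Longrightarrow> J \<noteq> {} \<Longrightarrow> nullhomotopic_maps (nsphere (card J - 1)) Y"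
    "continuous_map (powertop_on (grid_union Q)) Y g"
  shows "\<exists>G. continuous_map (powertop_on (grid_union P)) Y G \<and> (\<forall>x\<in>grid_union Q. G x = g x)"
  using assms
proof (induction "card (P - Q)" arbitrary: P)
  case 0
  then have "P = Q" by auto
  then show ?case using 0 by blast
next
  case (Suc n)
  have fPQ: "finite (P - Q)" and "P - Q \<noteq> {}" using Suc by auto
  then have "Max (card ` snd ` (P - Q)) \<in> card ` snd ` (P - Q)" by (intro Max_in) auto
  then obtain z J where zJ: "(z, J) \<in> P - Q" "card J = Max (card ` snd ` (P - Q))" by auto
  have max: "p = (z, J)" if p: "p \<in> P" "grid_cell z J \<subseteq> grid_cell (fst p) (snd p)" for p
  proof (rule ccontr)
    assume neq: "p \<noteq> (z, J)"
    have "finite (snd p)" using Suc.prems(3) p(1) unfolding grid_complex_def by blast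
    then have "card J < card (snd p)"
      using card_directions_proper_subcell[OF _ p(2)] neq by (metis prod.collapse)
    moreover have "p \<notin> Q"
      using Suc.prems(4) p(2) zJ(1) unfolding grid_complex_def by auto
    then have "card (snd p) \<le> card J" using zJ(2) fPQ p(1) by (auto intro!: Max_ge)
    ultimately show False by simp
  qed
  let ?P' = "P - {(z, J)}"
  have "n = card (?P' - Q)" using Suc.hyps(2) zJ(1) fPQ by (simp add: Diff_insert2[symmetric])
  moreover have "grid_complex ?P'" using grid_complex_remove_maximal[OF Suc.prems(3)] max by blast
  ultimately obtain G' where G': "continuous_map (powertop_on (grid_union ?P')) Y G'"
    "\<forall>x\<in>grid_union Q. G' x = g x"
    using Suc.hyps(1)[of ?P'] Suc.prems zJ(1) by blast
  obtain G where G: "continuous_map (powertop_on (grid_union P)) Y G"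
    "\<And>x. x \<in> grid_union ?P' \<Longrightarrow> G x = G' x"
    using grid_extension_over_maximal_cell[OF Suc.prems(1,3) _ max Suc.prems(5) _ G'(1)] zJ(1)
      Suc.prems(6) by blast
  have "grid_union Q \<subseteq> grid_union ?P'"
    using Suc.prems(2) zJ(1) unfolding grid_union_def by blast
  then show ?case using G G'(2) by (intro exI[of _ G]) auto
qed

section \<open>A fine cubical subdivision of the sphere\<close>

lemma uniformly_continuous_coordinatewise:
  fixes h :: "(nat \<Rightarrow> real) \<Rightarrow> real"
  assumes h: "continuous_map (powertop_on S) euclideanreal h"
    and S: "compactin (powertop_real UNIV) S" and \<epsilon>: "\<epsilon> > 0"
  obtains \<delta> where "\<delta> > 0"
    and "\<And>x y. x \<in> S \<Longrightarrow> y \<in> S \<Longrightarrow> (\<forall>j. \<bar>x j - y j\<bar> \<le> \<delta>) \<Longrightarrow> \<bar>h x - h y\<bar> < \<epsilon>"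
proof -
  have "continuous_on S h"
    using h by (simp add: euclidean_product_topology continuous_map_iff_continuous)
  moreover have "compact S" using S by (simp add: euclidean_product_topology)
  ultimately have "uniformly_continuous_on S h" by (rule compact_uniformly_continuous)
  then obtain d where d: "d > 0"
    and close: "\<And>x y. x \<in> S \<Longrightarrow> y \<in> S \<Longrightarrow> dist y x < d \<Longrightarrow> dist (h y) (h x) < \<epsilon>"
    unfolding uniformly_continuous_on_def using \<epsilon> by metis
  obtain N where N: "(1/2::real)^N < d/2" using real_arch_pow_inv[of "d/2" "1/2::real"] d by auto
  show thesis
  proof (rule that[of "d/8"])
    fix x y assume x: "x \<in> S" and y: "y \<in> S" and c: "\<forall>j. \<bar>x j - y j\<bar> \<le> d/8"
    let ?D = "{dist (x (from_nat n)) (y (from_nat n)) |n. n \<le> N}"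
    have "Max ?D \<le> d/8"
    proof (rule Max.boundedI)
      have "?D = (\<lambda>n. dist (x (from_nat n)) (y (from_nat n))) ` {..N}" by auto
      then show "finite ?D" by simp
    qed (use c in \<open>auto simp: dist_real_def\<close>)
    then have "dist x y < d"
      using dist_fun_le_dist_first_terms[of x y N] N d by linarith
    then show "\<bar>h x - h y\<bar> < \<epsilon>" using close[OF y x] by (simp add: dist_real_def abs_minus_commute)
  qed (use d in simp)
qed

definition box_center :: "nat \<Rightarrow> nat \<Rightarrow> (nat \<Rightarrow> real)" where
  "box_center i M = (\<lambda>j. if j \<le> i then real M / 2 else 0)"

definition box_boundary :: "nat \<Rightarrow> nat \<Rightarrow> (nat \<Rightarrow> real) set" where
  "box_boundary i M = cube_boundary (box_center i M) (real M / 2) {..i}"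

lemma mem_box_boundary_iff:
  "x \<in> box_boundary i M \<longleftrightarrow>
    (\<forall>j\<le>i. 0 \<le> x j \<and> x j \<le> real M) \<and> (\<forall>j>i. x j = 0) \<and> (\<exists>j\<le>i. x j = 0 \<or> x j = real M)"
proof -
  have a: "(\<bar>x j - box_center i M j\<bar> \<le> real M / 2) \<longleftrightarrow> (0 \<le> x j \<and> x j \<le> real M)" if "j \<le> i" for j
  proof -
    have g: "box_center i M j = real M / 2" using that by (simp add: box_center_def)
    show ?thesis unfolding g by (rule iffI; linarith)
  qed
  have b: "(\<bar>x j - box_center i M j\<bar> = real M / 2) \<longleftrightarrow> (x j = 0 \<or> x j = real M)" if "j \<le> i" for j
  proof -
    have g: "box_center i M j = real M / 2" using that by (simp add: box_center_def)
    show ?thesis unfolding g by (rule iffI; linarith)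
  qed
  have c: "x j = box_center i M j \<longleftrightarrow> x j = 0" if "\<not> j \<le> i" for j
    using that unfolding box_center_def by simp
  show ?thesis
    unfolding box_boundary_def cube_boundary_def cube_def mem_Collect_eq
    using a b c by (auto simp: not_le)
qed

lemma compactin_box_boundary: "compactin (powertop_real UNIV) (box_boundary i M)"
  unfolding box_boundary_def
  by (rule closed_compactin[OF compactin_cube cube_boundary_subset_cube closedin_cube_boundary]) simp

lemma homeomorphic_map_box_boundary:
  assumes "M \<ge> 1"
  shows "homeomorphic_map (powertop_on (box_boundary i M)) (nsphere i)
    (sphere_projection (box_center i M) id i)"
  unfolding box_boundary_def using assms
  by (intro homeomorphic_map_sphere_projection) (auto simp: bij_betw_def)

definition shrink :: "nat \<Rightarrow> (nat \<Rightarrow> real) \<Rightarrow> (nat \<Rightarrow> real)" where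
  "shrink M x = (\<lambda>j. x j / real M)"

lemma shrink_box_boundary:
  assumes M: "M \<ge> 1" and x: "x \<in> box_boundary i M"
  shows "shrink M x \<in> box_boundary i 1"
proof -
  have Mp: "real M > 0" using M by simp
  have "\<forall>j\<le>i. 0 \<le> x j \<and> x j \<le> real M" "\<forall>j>i. x j = 0" "\<exists>j\<le>i. x j = 0 \<or> x j = real M"
    using x by (auto simp: mem_box_boundary_iff)
  then show ?thesis using Mp unfolding mem_box_boundary_iff shrink_def by (auto simp: divide_le_eq)
qed

lemma sphere_projection_shrink:
  assumes M: "M \<ge> 1" 
  shows "sphere_projection (box_center i M) id i x
    = sphere_projection (box_center i 1) id i (shrink M x)"
proof -
  have Mp: "real M > 0" using M by simp
  have d: "shrink M x k - box_center i 1 k = (x k - box_center i M k) / real M" if "k \<le> i" for k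
    using that Mp by (simp add: shrink_def box_center_def field_simps)
  have "(\<Sum>k\<le>i. (shrink M x k - box_center i 1 k)^2) = (\<Sum>k\<le>i. (x k - box_center i M k)^2 / (real M)^2)"
    by (rule sum.cong[OF refl]) (simp only: d atMost_iff power_divide)
  then have "cube_norm (box_center i 1) id i (shrink M x)
      = sqrt ((\<Sum>k\<le>i. (x k - box_center i M k)^2) / (real M)^2)"
    unfolding cube_norm_def by (simp add: sum_divide_distrib)
  also have "\<dots> = cube_norm (box_center i M) id i x / real M"
    unfolding cube_norm_def using Mp by (simp add: real_sqrt_divide)
  finally have n: "cube_norm (box_center i 1) id i (shrink M x)
      = cube_norm (box_center i M) id i x / real M" .
  show ?thesis
  proof
    fix k
    show "sphere_projection (box_center i M) id i x k
        = sphere_projection (box_center i 1) id i (shrink M x) k"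
      using d[of k] n Mp by (simp add: sphere_projection_def)
  qed
qed

definition box_cells :: "nat \<Rightarrow> nat \<Rightarrow> ((nat \<Rightarrow> int) \<times> nat set) set" where
  "box_cells i M = {p. grid_cell (fst p) (snd p) \<subseteq> box_boundary i M}"

lemma grid_center_notin_if_integral: "grid_center z J j = of_int w \<Longrightarrow> j \<notin> J"
  using of_int_neq_half_integer[of w "z j"] by (auto simp: grid_center_def)

lemma box_cells_directions:
  assumes "(z, J) \<in> box_cells i M"
  shows "J \<subseteq> {..i}" and "card J \<le> i"
proof -
  have "grid_center z J \<in> box_boundary i M"
    using assms grid_center_in_grid_cell unfolding box_cells_def by auto
  then have c: "\<And>j. i < j \<Longrightarrow> grid_center z J j = of_int 0"
    and "\<exists>j\<le>i. grid_center z J j = of_int 0 \<or> grid_center z J j = of_int (int M)"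
    by (auto simp: mem_box_boundary_iff)
  then obtain j0 where j0: "j0 \<le> i"
    and "grid_center z J j0 = of_int 0 \<or> grid_center z J j0 = of_int (int M)" by blast
  then have "j0 \<notin> J" using grid_center_notin_if_integral by blast
  show J: "J \<subseteq> {..i}"
  proof
    fix j assume "j \<in> J"
    then have "\<not> i < j" using c grid_center_notin_if_integral by blast
    then show "j \<in> {..i}" by simp
  qed
  then have "J \<subseteq> {..i} - {j0}" using \<open>j0 \<notin> J\<close> by auto
  then have "card J \<le> card ({..i} - {j0})" by (intro card_mono) auto
  also have "\<dots> = i" using j0 by simp
  finally show "card J \<le> i" .
qed

lemma box_cells_corner:
  assumes zJ: "(z, J) \<in> box_cells i M"
  shows "j \<le> i \<Longrightarrow> z j \<in> {0..int M}" and "i < j \<Longrightarrow> z j = 0"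
proof -
  have g: "grid_center z J \<in> box_boundary i M"
    using zJ grid_center_in_grid_cell unfolding box_cells_def by auto
  then have "0 \<le> grid_center z J j \<and> grid_center z J j \<le> real M"
    by (cases "j \<le> i") (auto simp: mem_box_boundary_iff)
  then have "(-1::real) < of_int (z j)" "of_int (z j) \<le> real M"
    by (auto simp: grid_center_def split: if_splits)
  then have "-1 < z j" "z j \<le> int M" by linarith+
  then show "j \<le> i \<Longrightarrow> z j \<in> {0..int M}" by simp
  assume "i < j"
  then have "j \<notin> J" and "grid_center z J j = 0"
    using box_cells_directions(1)[OF zJ] g by (auto simp: mem_box_boundary_iff)
  then show "z j = 0" by (simp add: grid_center_def)
qed

lemma finite_box_cells: "finite (box_cells i M)"
proof -
  let ?Z = "{z. \<forall>j. (j \<in> {..i} \<longrightarrow> z j \<in> {0..int M}) \<and> (j \<notin> {..i} \<longrightarrow> z j = 0)}"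
  have "p \<in> ?Z \<times> Pow {..i}" if "p \<in> box_cells i M" for p
  proof (cases p)
    case (Pair z J)
    then show ?thesis
      using that box_cells_corner[of z J i M] box_cells_directions(1)[of z J i M]
      by (auto simp: not_le)
  qed
  then have "box_cells i M \<subseteq> ?Z \<times> Pow {..i}" by blast
  moreover have "finite (?Z \<times> Pow {..i})"
    by (intro finite_cartesian_product finite_set_of_finite_funs) auto
  ultimately show ?thesis by (rule finite_subset)
qed

lemma grid_complex_box_cells: "grid_complex (box_cells i M)"
  unfolding grid_complex_def
proof (intro ballI conjI allI impI)
  fix p assume p: "p \<in> box_cells i M"
  then show "finite (snd p)"
    using box_cells_directions(1)[of "fst p" "snd p"] by (auto intro: finite_subset)
  fix z' J' assume "grid_cell z' J' \<subseteq> grid_cell (fst p) (snd p)"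
  then show "(z', J') \<in> box_cells i M" using p unfolding box_cells_def by auto
qed

lemma nullhomotopic_maps_box_cells:
  assumes "k_connected (m - 1) Y" and "int i \<le> m" and zJ: "(z, J) \<in> box_cells i M" and "J \<noteq> {}"
  shows "nullhomotopic_maps (nsphere (card J - 1)) Y"
proof -
  have "finite J" using box_cells_directions(1)[OF zJ] by (rule finite_subset) simp
  then have "card J \<ge> 1" using \<open>J \<noteq> {}\<close> by (simp add: Suc_le_eq card_gt_0_iff)
  then have "int (card J - 1) \<le> m - 1"
    using box_cells_directions(2)[OF zJ] \<open>int i \<le> m\<close> by (simp add: of_nat_diff)
  then show ?thesis using assms(1) by (simp add: k_connected_iff)
qed

lemma nullhomotopic_maps_box_boundary:
  assumes "k_connected m Y" and "int i \<le> m" and "M \<ge> 1"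
  shows "nullhomotopic_maps (powertop_on (box_boundary i M)) Y"
proof -
  have "powertop_on (box_boundary i M) homeomorphic_space nsphere i"
    using homeomorphic_map_box_boundary[OF \<open>M \<ge> 1\<close>] unfolding homeomorphic_space by blast
  then have "nsphere i homeomorphic_space powertop_on (box_boundary i M)"
    by (rule homeomorphic_space_sym[THEN iffD1])
  moreover have "nullhomotopic_maps (nsphere i) Y"
    using assms(1,2) by (simp add: k_connected_iff)
  ultimately show ?thesis by (rule nullhomotopic_maps_homeomorphic)
qed

lemma mem_grid_cell_floor: "x \<in> grid_cell (\<lambda>j. \<lfloor>x j\<rfloor>) {j. x j \<noteq> of_int \<lfloor>x j\<rfloor>}"
  unfolding grid_cell_def by (auto simp: of_int_floor_le less_imp_le)

text \<open>The cell of the integer grid whose relative interior contains \<open>x\<close> keeps every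
  integral coordinate of \<open>x\<close>, so it stays on the same face of the box.\<close>

lemma floor_cell_subset_box_boundary:
  assumes x: "x \<in> box_boundary i M"
  shows "grid_cell (\<lambda>j. \<lfloor>x j\<rfloor>) {j. x j \<noteq> of_int \<lfloor>x j\<rfloor>} \<subseteq> box_boundary i M"
proof
  fix y assume "y \<in> grid_cell (\<lambda>j. \<lfloor>x j\<rfloor>) {j. x j \<noteq> of_int \<lfloor>x j\<rfloor>}"
  then have y: "if x j \<noteq> of_int \<lfloor>x j\<rfloor> then of_int \<lfloor>x j\<rfloor> \<le> y j \<and> y j \<le> of_int \<lfloor>x j\<rfloor> + 1
      else y j = of_int \<lfloor>x j\<rfloor>" for j
    by (simp add: grid_cell_def)
  then have keep: "y j = x j" if "x j = of_int \<lfloor>x j\<rfloor>" for j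
    using that by presburger
  have x1: "\<forall>j\<le>i. 0 \<le> x j \<and> x j \<le> real M" and x2: "\<forall>j>i. x j = 0"
    and x3: "\<exists>j\<le>i. x j = 0 \<or> x j = real M" using x by (auto simp: mem_box_boundary_iff)
  have "0 \<le> y j \<and> y j \<le> real M" if "j \<le> i" for j
  proof (cases "x j = of_int \<lfloor>x j\<rfloor>")
    case False
    then have "of_int \<lfloor>x j\<rfloor> < x j" by (metis of_int_floor_le order_le_less)
    then have "\<lfloor>x j\<rfloor> < int M" using x1 that by fastforce
    then have "of_int \<lfloor>x j\<rfloor> + 1 \<le> real M" by linarith
    moreover have "(0::real) \<le> of_int \<lfloor>x j\<rfloor>" using x1 that by fastforce
    moreover have "of_int \<lfloor>x j\<rfloor> \<le> y j \<and> y j \<le> of_int \<lfloor>x j\<rfloor> + 1" using y[of j] False by simp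
    ultimately show ?thesis by linarith
  next
    case True
    then show ?thesis using keep[OF True] x1 that by simp
  qed
  moreover have "y j = 0" if "j > i" for j using x2 keep[of j] that by simp
  moreover have "\<exists>j\<le>i. y j = 0 \<or> y j = real M"
  proof -
    obtain j where j: "j \<le> i" "x j = 0 \<or> x j = real M" using x3 by blast
    then have "y j = x j" using keep[of j] by auto
    then show ?thesis using j by auto
  qed
  ultimately show "y \<in> box_boundary i M" by (simp add: mem_box_boundary_iff)
qed

lemma grid_union_box_cells: "grid_union (box_cells i M) = box_boundary i M"
proof
  show "grid_union (box_cells i M) \<subseteq> box_boundary i M" unfolding grid_union_def box_cells_def by auto
  show "box_boundary i M \<subseteq> grid_union (box_cells i M)"
  proof
    fix x assume "x \<in> box_boundary i M"
    then have "((\<lambda>j. \<lfloor>x j\<rfloor>), {j. x j \<noteq> of_int \<lfloor>x j\<rfloor>}) \<in> box_cells i M"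
      unfolding box_cells_def using floor_cell_subset_box_boundary by simp
    then show "x \<in> grid_union (box_cells i M)"
      using mem_grid_cell_floor[of x] unfolding grid_union_def by force
  qed
qed

lemma grid_cell_coordinate_dist: "x \<in> grid_cell z J \<Longrightarrow> y \<in> grid_cell z J \<Longrightarrow> \<bar>x j - y j\<bar> \<le> 1"
  unfolding grid_cell_def by (auto split: if_splits dest!: spec[of _ j]; linarith)

lemma box_cells_fine:
  assumes h: "continuous_map (nsphere i) euclideanreal h" and \<epsilon>: "\<epsilon> > 0"
  obtains M where "M \<ge> 1"
    and "\<And>z J x y. (z, J) \<in> box_cells i M \<Longrightarrow> x \<in> grid_cell z J \<Longrightarrow> y \<in> grid_cell z J \<Longrightarrow>
           \<bar>h (sphere_projection (box_center i M) id i x)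
            - h (sphere_projection (box_center i M) id i y)\<bar> < \<epsilon>"
proof -
  define F where "F = sphere_projection (box_center i 1) id i"
  have "continuous_map (powertop_on (box_boundary i 1)) (nsphere i) F"
    unfolding F_def using homeomorphic_map_box_boundary[of 1 i] homeomorphic_imp_continuous_map by auto
  then have "continuous_map (powertop_on (box_boundary i 1)) euclideanreal (h \<circ> F)"
    using h by (rule continuous_map_compose)
  then obtain \<delta> where \<delta>: "\<delta> > 0" and close: "\<And>x y. x \<in> box_boundary i 1 \<Longrightarrow>
      y \<in> box_boundary i 1 \<Longrightarrow> (\<forall>j. \<bar>x j - y j\<bar> \<le> \<delta>) \<Longrightarrow> \<bar>(h \<circ> F) x - (h \<circ> F) y\<bar> < \<epsilon>"
    using compactin_box_boundary \<epsilon> by (rule uniformly_continuous_coordinatewise) blast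
  obtain M :: nat where M: "1 / \<delta> < real M" using reals_Archimedean2 by blast
  have "0 < 1 / \<delta>" using \<delta> by simp
  then have M1: "M \<ge> 1" using M by linarith
  then have Mp: "real M > 0" by simp
  have "1 / real M \<le> \<delta>" using M \<delta> Mp by (simp add: field_simps)
  show thesis
  proof (rule that[OF M1])
    fix z J x y
    assume zJ: "(z, J) \<in> box_cells i M" and x: "x \<in> grid_cell z J" and y: "y \<in> grid_cell z J"
    have xB: "x \<in> box_boundary i M" and yB: "y \<in> box_boundary i M"
      using zJ x y by (auto simp: box_cells_def)
    have "\<bar>shrink M x j - shrink M y j\<bar> \<le> \<delta>" for j
    proof -
      have "\<bar>shrink M x j - shrink M y j\<bar> = \<bar>x j - y j\<bar> / real M"
        by (simp add: shrink_def diff_divide_distrib[symmetric])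
      also have "\<dots> \<le> 1 / real M"
        using grid_cell_coordinate_dist[OF x y, of j] Mp by (simp add: divide_right_mono)
      finally show ?thesis using \<open>1 / real M \<le> \<delta>\<close> by linarith
    qed
    then show "\<bar>h (sphere_projection (box_center i M) id i x)
        - h (sphere_projection (box_center i M) id i y)\<bar> < \<epsilon>"
      using close[OF shrink_box_boundary[OF M1 xB] shrink_box_boundary[OF M1 yB]]
      by (simp add: sphere_projection_shrink[OF M1] F_def)
  qed
qed

section \<open>Gluing a cone along a subcomplex\<close>

text \<open>The cone \<open>v * L\<close> glued to \<open>K\<close> is \<open>K \<union> insert v ` L\<close>. Projection from the cone
  point \<open>v\<close> onto the opposite face:\<close>

definition push_off :: "'a \<Rightarrow> ('a \<Rightarrow> real) \<Rightarrow> ('a \<Rightarrow> real)" where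
  "push_off v f = (\<lambda>a. if a = v then 0 else f a / (1 - f v))"

lemma supp_push_off: "f v < 1 \<Longrightarrow> supp (push_off v f) = supp f - {v}"
  by (auto simp: supp_def push_off_def)

lemma barycentric_push_off:
  assumes p: "barycentric f" and fv: "f v < 1"
  shows "barycentric (push_off v f)"
proof -
  have nn: "\<forall>a. 0 \<le> push_off v f a" using p fv by (auto simp: barycentric_def push_off_def)
  have fin: "finite (supp f)" using p by (simp add: barycentric_def)
  have s1: "sum f (supp f) = 1" using p by (simp add: barycentric_def)
  have "sum (push_off v f) (supp (push_off v f)) = sum (\<lambda>a. f a / (1 - f v)) (supp f - {v})"
    unfolding supp_push_off[of f v, OF fv] by (intro sum.cong) (auto simp: push_off_def)
  also have "\<dots> = sum f (supp f - {v}) / (1 - f v)" by (simp add: sum_divide_distrib)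
  also have "sum f (supp f - {v}) = 1 - f v"
    using fin s1 by (simp add: sum_diff1 supp_def)
  finally show ?thesis using nn fin fv unfolding barycentric_def supp_push_off[of f v, OF fv] by simp
qed

lemma cone_union_face_cases:
  assumes v: "v \<notin> \<Union>K" and LK: "L \<subseteq> K" and t: "\<tau> \<in> K \<union> insert v ` L"
  shows "(v \<notin> \<tau> \<longrightarrow> \<tau> \<in> K) \<and> (v \<in> \<tau> \<longrightarrow> \<tau> - {v} \<in> L)"
proof -
  { assume "\<tau> \<in> K" then have "v \<notin> \<tau>" using v by blast }
  moreover
  { fix \<sigma> assume "\<sigma> \<in> L" "\<tau> = insert v \<sigma>"
    moreover have "v \<notin> \<sigma>" using \<open>\<sigma> \<in> L\<close> LK v by blast
    ultimately have "v \<in> \<tau> \<and> \<tau> - {v} \<in> L" by simp }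
  ultimately show ?thesis using t by blast
qed

lemma downward_closed_cone_union:
  assumes dK: "downward_closed K" and dL: "downward_closed L" and LK: "L \<subseteq> K" and v: "v \<notin> \<Union>K"
  shows "downward_closed (K \<union> insert v ` L)"
  unfolding downward_closed_def
proof (intro ballI allI impI)
  fix \<tau> \<sigma> assume t: "\<tau> \<in> K \<union> insert v ` L" and s: "\<sigma> \<subseteq> \<tau>"
  show "\<sigma> \<in> K \<union> insert v ` L"
  proof (cases "\<tau> \<in> K")
    case True then show ?thesis using dK s unfolding downward_closed_def by blast
  next
    case False
    then obtain \<rho> where r: "\<rho> \<in> L" "\<tau> = insert v \<rho>" using t by blast
    show ?thesis
    proof (cases "v \<in> \<sigma>")
      case True
      have "\<sigma> - {v} \<in> L" using dL r s unfolding downward_closed_def by blast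
      moreover have "\<sigma> = insert v (\<sigma> - {v})" using True by blast
      ultimately show ?thesis by blast
    next
      case False
      then have "\<sigma> \<subseteq> \<rho>" using r s by blast
      then have "\<sigma> \<in> L" using dL r unfolding downward_closed_def by blast
      then show ?thesis using LK by blast
    qed
  qed
qed

lemma push_off_in_realization:
  assumes v: "v \<notin> \<Union>K" and LK: "L \<subseteq> K" and f: "f \<in> realization (K \<union> insert v ` L)" and fv: "f v < 1"
  shows "push_off v f \<in> realization K" and "0 < f v \<Longrightarrow> push_off v f \<in> realization L"
proof -
  have pf: "barycentric f" and sf: "supp f \<in> K \<union> insert v ` L" using f by (auto simp: realization_iff)
  note gf = cone_union_face_cases[OF v LK sf]
  have pr: "barycentric (push_off v f)" by (rule barycentric_push_off[OF pf fv])
  have "supp f - {v} \<in> K"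
  proof (cases "v \<in> supp f")
    case True then show ?thesis using gf LK by blast
  next
    case False then show ?thesis using gf by simp
  qed
  then show "push_off v f \<in> realization K"
    using pr by (simp add: realization_iff supp_push_off[of f v, OF fv])
  assume "0 < f v"
  then have "v \<in> supp f" by (simp add: supp_def)
  then have "supp f - {v} \<in> L" using gf by blast
  then show "push_off v f \<in> realization L"
    using pr by (simp add: realization_iff supp_push_off[of f v, OF fv])
qed

lemma continuous_map_push_off:
  assumes v: "v \<notin> \<Union>K" and LK: "L \<subseteq> K"
    and \<psi>: "continuous_map T (realization_top (K \<union> insert v ` L)) \<psi>"
    and lt: "\<And>x. x \<in> topspace T \<Longrightarrow> \<psi> x v < 1"
  shows "continuous_map T (realization_top K) (\<lambda>x. push_off v (\<psi> x))"
    and "(\<And>x. x \<in> topspace T \<Longrightarrow> 0 < \<psi> x v) \<Longrightarrow>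
      continuous_map T (realization_top L) (\<lambda>x. push_off v (\<psi> x))"
proof -
  have in_X: "\<psi> x \<in> realization (K \<union> insert v ` L)" if "x \<in> topspace T" for x
    using continuous_map_funspace[OF \<psi>] that by auto
  have coord: "continuous_map T euclideanreal (\<lambda>x. push_off v (\<psi> x) a)" for a
  proof (cases "a = v")
    case False
    have "continuous_map T euclideanreal (\<lambda>x. \<psi> x a / (1 - \<psi> x v))"
      by (intro continuous_intros continuous_map_realization_coordinate[OF \<psi>]) (use lt in force)
    then show ?thesis using False by (simp add: push_off_def)
  qed (simp add: push_off_def)
  show "continuous_map T (realization_top K) (\<lambda>x. push_off v (\<psi> x))"
    unfolding continuous_map_realization_top_iff
    using push_off_in_realization(1)[OF v LK in_X lt] coord by blast
  assume "\<And>x. x \<in> topspace T \<Longrightarrow> 0 < \<psi> x v"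
  then show "continuous_map T (realization_top L) (\<lambda>x. push_off v (\<psi> x))"
    unfolding continuous_map_realization_top_iff
    using push_off_in_realization(2)[OF v LK in_X lt] coord by blast
qed

lemma homotopic_slide_to_vertex:
  assumes X: "downward_closed X" and \<psi>: "continuous_map T (realization_top X) \<psi>"
    and \<beta>: "continuous_map T euclideanreal \<beta>" "\<And>x. 0 \<le> \<beta> x" "\<And>x. \<beta> x \<le> 1"
    and pos: "\<And>x. \<beta> x \<noteq> 0 \<Longrightarrow> 0 < \<psi> x v"
  defines "\<mu> \<equiv> \<lambda>x a. (1 - \<beta> x) * \<psi> x a + \<beta> x * indicator {v} a"
  shows "\<And>x. x \<in> topspace T \<Longrightarrow> supp (\<mu> x) \<subseteq> supp (\<psi> x)"
    and "continuous_map T (realization_top X) \<mu>"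
    and "homotopic_with (\<lambda>_. True) T (realization_top X) \<psi> \<mu>"
proof -
  have \<psi>_face: "supp (\<psi> x) \<in> X" and \<psi>_bar: "barycentric (\<psi> x)" if "x \<in> topspace T" for x
    using continuous_map_funspace[OF \<psi>] that by (auto simp: realization_iff)
  have \<mu>: "supp (\<mu> x) \<subseteq> supp (\<psi> x) \<and> \<mu> x \<in> realization X" if x: "x \<in> topspace T" for x
  proof (cases "\<beta> x = 0")
    case True
    then show ?thesis using \<psi>_face[OF x] \<psi>_bar[OF x] by (simp add: \<mu>_def realization_iff)
  next
    case False
    then have "supp (\<psi> x) \<union> supp (indicator {v}) = supp (\<psi> x)"
      using pos[OF False] by (auto simp: supp_def indicator_def)
    then show ?thesis
      using supp_convex_combination[OF \<psi>_bar[OF x] barycentric_indicator \<beta>(2,3)]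
        convex_combination_in_realization[OF X _ \<psi>_bar[OF x] barycentric_indicator \<beta>(2,3)]
        \<psi>_face[OF x] unfolding \<mu>_def by auto
  qed
  then show "supp (\<mu> x) \<subseteq> supp (\<psi> x)" if "x \<in> topspace T" for x using that by blast
  show cont: "continuous_map T (realization_top X) \<mu>"
    unfolding continuous_map_realization_top_iff
  proof (intro conjI ballI allI)
    show "\<mu> x \<in> realization X" if "x \<in> topspace T" for x using \<mu>[OF that] by blast
    show "continuous_map T euclideanreal (\<lambda>x. \<mu> x a)" for a
      unfolding \<mu>_def by (intro continuous_intros continuous_map_realization_coordinate[OF \<psi>] \<beta>(1))
  qed
  show "homotopic_with (\<lambda>_. True) T (realization_top X) \<psi> \<mu>"
    by (rule straight_line_homotopic[OF X \<psi> cont]) (use \<mu> \<psi>_face in \<open>auto simp: Un_absorb2\<close>)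
qed

text \<open>First slide to the cone point where the \<open>v\<close>-coordinate is at least \<open>b\<close> (and partly
  where it exceeds \<open>b/2\<close>), then move straight to the given map.\<close>

lemma homotopic_push_off:
  assumes K: "downward_closed K" and L: "downward_closed L" and LK: "L \<subseteq> K" and v: "v \<notin> \<Union>K"
    and b: "0 < b" "b \<le> 1"
    and \<psi>: "continuous_map T (realization_top (K \<union> insert v ` L)) \<psi>"
    and \<kappa>: "continuous_map T (realization_top K) \<kappa>"
    and low: "\<And>x. x \<in> topspace T \<Longrightarrow> \<psi> x v < b \<Longrightarrow> \<kappa> x = push_off v (\<psi> x)"
    and high: "\<And>x. x \<in> topspace T \<Longrightarrow> b \<le> \<psi> x v \<Longrightarrow> \<kappa> x \<in> realization L"
  shows "homotopic_with (\<lambda>_. True) T (realization_top (K \<union> insert v ` L)) \<psi> \<kappa>"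
proof -
  let ?X = "K \<union> insert v ` L"
  have X: "downward_closed ?X" by (rule downward_closed_cone_union[OF K L LK v])
  define \<beta> where "\<beta> x = min 1 (max 0 (2 * \<psi> x v / b - 1))" for x
  define \<mu> where "\<mu> x = (\<lambda>a. (1 - \<beta> x) * \<psi> x a + \<beta> x * indicator {v} a)" for x
  have \<beta>01: "0 \<le> \<beta> x" "\<beta> x \<le> 1" for x unfolding \<beta>_def by auto
  have \<beta>_cont: "continuous_map T euclideanreal \<beta>"
    unfolding \<beta>_def
    by (intro continuous_intros continuous_map_realization_coordinate[OF \<psi>]) (use b in auto)
  have \<beta>_pos: "0 < \<psi> x v" if "\<beta> x \<noteq> 0" for x
  proof -
    have "0 < 2 * \<psi> x v / b - 1" using that unfolding \<beta>_def by linarith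
    then show ?thesis using b by (simp add: field_simps)
  qed
  have \<beta>_one: "\<beta> x = 1 \<longleftrightarrow> b \<le> \<psi> x v" for x
  proof -
    have "\<beta> x = 1 \<longleftrightarrow> 1 \<le> 2 * \<psi> x v / b - 1" unfolding \<beta>_def by linarith
    also have "\<dots> \<longleftrightarrow> b \<le> \<psi> x v" using b by (simp add: field_simps)
    finally show ?thesis .
  qed
  note slide = homotopic_slide_to_vertex[OF X \<psi> \<beta>_cont \<beta>01]
  have \<mu>_supp: "supp (\<mu> x) \<subseteq> supp (\<psi> x)" if "x \<in> topspace T" for x
    unfolding \<mu>_def by (rule slide(1)) (use \<beta>_pos that in auto)
  have \<mu>: "continuous_map T (realization_top ?X) \<mu>"
    unfolding \<mu>_def by (rule slide(2)) (use \<beta>_pos in auto)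
  have \<psi>\<mu>: "homotopic_with (\<lambda>_. True) T (realization_top ?X) \<psi> \<mu>"
    unfolding \<mu>_def by (rule slide(3)) (use \<beta>_pos in auto)
  have "homotopic_with (\<lambda>_. True) T (realization_top ?X) \<mu> \<kappa>"
  proof (rule straight_line_homotopic[OF X \<mu>])
    show "continuous_map T (realization_top ?X) \<kappa>"
      by (rule continuous_map_realization_mono[OF \<kappa>]) blast
    fix x assume x: "x \<in> topspace T"
    show "supp (\<mu> x) \<union> supp (\<kappa> x) \<in> ?X"
    proof (cases "\<beta> x = 1")
      case True
      then have "\<mu> x = indicator {v}" by (simp add: \<mu>_def)
      moreover have "supp (\<kappa> x) \<in> L"
        using high[OF x] True \<beta>_one by (auto simp: realization_iff)
      ultimately show ?thesis by auto
    next
      case False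
      then have "supp (\<kappa> x) = supp (\<psi> x) - {v}"
        using low[OF x] \<beta>_one b supp_push_off by force
      then have "supp (\<mu> x) \<union> supp (\<kappa> x) \<subseteq> supp (\<psi> x)" using \<mu>_supp[OF x] by blast
      moreover have "supp (\<psi> x) \<in> ?X"
        using continuous_map_funspace[OF \<psi>] x by (auto simp: realization_iff)
      ultimately show ?thesis using X unfolding downward_closed_def by blast
    qed
  qed
  with \<psi>\<mu> show ?thesis by (rule homotopic_with_trans)
qed

text \<open>On the cells where the \<open>v\<close>-coordinate stays above \<open>3/10\<close> the push-off can be
  replaced by a map into \<open>L\<close>: on those cells where it also stays below \<open>95/100\<close> the push-off
  itself lands in \<open>L\<close>, and this is extended cell by cell over the rest. By the small
  oscillation, every point where the coordinate is below \<open>85/100\<close> lies in one of the former.\<close>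

lemma push_off_extension_high:
  assumes v: "v \<notin> \<Union>K" and LK: "L \<subseteq> K"
    and fin: "finite C" and C: "grid_complex C" and L: "realization L \<noteq> {}"
    and null: "\<And>z J. (z, J) \<in> C \<Longrightarrow> J \<noteq> {} \<Longrightarrow>
      nullhomotopic_maps (nsphere (card J - 1)) (realization_top L)"
    and \<psi>: "continuous_map (powertop_on (grid_union C)) (realization_top (K \<union> insert v ` L)) \<psi>"
    and osc: "\<And>z J x y. (z, J) \<in> C \<Longrightarrow> x \<in> grid_cell z J \<Longrightarrow> y \<in> grid_cell z J \<Longrightarrow>
      \<bar>\<psi> x v - \<psi> y v\<bar> < 1/10"
  defines "P \<equiv> {p \<in> C. \<forall>x\<in>grid_cell (fst p) (snd p). 3/10 < \<psi> x v}"
  shows "\<exists>\<Lambda>. continuous_map (powertop_on (grid_union P)) (realization_top L) \<Lambda> \<and>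
    (\<forall>x\<in>grid_union P. \<psi> x v < 85/100 \<longrightarrow> \<Lambda> x = push_off v (\<psi> x))"
proof -
  define Q where "Q = {p \<in> P. \<forall>x\<in>grid_cell (fst p) (snd p). \<psi> x v < 95/100}"
  have PC: "P \<subseteq> C" and QP: "Q \<subseteq> P" unfolding P_def Q_def by auto
  have gP: "grid_complex P" unfolding P_def by (rule grid_complex_restrict[OF C])
  have gQ: "grid_complex Q" unfolding Q_def by (rule grid_complex_restrict[OF gP])
  have QsubP: "grid_union Q \<subseteq> grid_union P" and PsubC: "grid_union P \<subseteq> grid_union C"
    using QP PC unfolding grid_union_def by blast+
  have "0 < \<psi> x v \<and> \<psi> x v < 1" if "x \<in> grid_union Q" for x
    using that QP unfolding grid_union_def P_def Q_def by fastforce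
  moreover have "continuous_map (powertop_on (grid_union Q)) (realization_top (K \<union> insert v ` L)) \<psi>"
    using continuous_map_from_subtopology_mono[OF \<psi>] QsubP PsubC by blast
  ultimately have pushQ:
    "continuous_map (powertop_on (grid_union Q)) (realization_top L) (\<lambda>x. push_off v (\<psi> x))"
    by (intro continuous_map_push_off(2)[OF v LK]) auto
  have "\<exists>\<Lambda>. continuous_map (powertop_on (grid_union P)) (realization_top L) \<Lambda> \<and>
      (\<forall>x\<in>grid_union Q. \<Lambda> x = push_off v (\<psi> x))"
    by (rule grid_extension[OF finite_subset[OF PC fin] QP gP gQ _ _ pushQ]) (use L PC null in auto)
  then obtain \<Lambda> where \<Lambda>: "continuous_map (powertop_on (grid_union P)) (realization_top L) \<Lambda>"
    and \<Lambda>_push: "\<And>x. x \<in> grid_union Q \<Longrightarrow> \<Lambda> x = push_off v (\<psi> x)" by blast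
  show ?thesis
  proof (intro exI conjI ballI impI)
    fix x assume x: "x \<in> grid_union P" "\<psi> x v < 85/100"
    then obtain z J where zJ: "(z, J) \<in> P" "x \<in> grid_cell z J" unfolding grid_union_def by auto
    have "\<psi> y v < 95/100" if "y \<in> grid_cell z J" for y
    proof -
      have "(z, J) \<in> C" using zJ(1) PC by blast
      then show ?thesis using osc[OF _ zJ(2) that] x(2) by linarith
    qed
    then have "(z, J) \<in> Q" using zJ(1) unfolding Q_def by auto
    then have "x \<in> grid_union Q" using zJ(2) unfolding grid_union_def by force
    then show "\<Lambda> x = push_off v (\<psi> x)" by (rule \<Lambda>_push)
  qed (rule \<Lambda>)
qed

text \<open>Off the cells where the \<open>v\<close>-coordinate stays above \<open>3/10\<close> it is below \<open>4/10\<close>, so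
  the push-off lands in \<open>K\<close> there and matches the previous map where the two pieces meet.\<close>

lemma push_off_extension:
  assumes v: "v \<notin> \<Union>K" and LK: "L \<subseteq> K"
    and fin: "finite C" and C: "grid_complex C" and L: "realization L \<noteq> {}"
    and null: "\<And>z J. (z, J) \<in> C \<Longrightarrow> J \<noteq> {} \<Longrightarrow>
      nullhomotopic_maps (nsphere (card J - 1)) (realization_top L)"
    and \<psi>: "continuous_map (powertop_on (grid_union C)) (realization_top (K \<union> insert v ` L)) \<psi>"
    and osc: "\<And>z J x y. (z, J) \<in> C \<Longrightarrow> x \<in> grid_cell z J \<Longrightarrow> y \<in> grid_cell z J \<Longrightarrow>
      \<bar>\<psi> x v - \<psi> y v\<bar> < 1/10"
  obtains \<kappa> where "continuous_map (powertop_on (grid_union C)) (realization_top K) \<kappa>"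
    and "\<And>x. x \<in> grid_union C \<Longrightarrow> \<psi> x v < 85/100 \<Longrightarrow> \<kappa> x = push_off v (\<psi> x)"
    and "\<And>x. x \<in> grid_union C \<Longrightarrow> 85/100 \<le> \<psi> x v \<Longrightarrow> \<kappa> x \<in> realization L"
proof -
  let ?P = "{p \<in> C. \<forall>x\<in>grid_cell (fst p) (snd p). 3/10 < \<psi> x v}"
  define R where "R = grid_union (C - ?P)"
  have "\<exists>\<Lambda>. continuous_map (powertop_on (grid_union ?P)) (realization_top L) \<Lambda> \<and>
      (\<forall>x\<in>grid_union ?P. \<psi> x v < 85/100 \<longrightarrow> \<Lambda> x = push_off v (\<psi> x))"
    by (rule push_off_extension_high[OF v LK fin C L null \<psi> osc])
  then obtain \<Lambda> where \<Lambda>: "continuous_map (powertop_on (grid_union ?P)) (realization_top L) \<Lambda>"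
    and \<Lambda>_push: "\<And>x. x \<in> grid_union ?P \<Longrightarrow> \<psi> x v < 85/100 \<Longrightarrow> \<Lambda> x = push_off v (\<psi> x)"
    by blast
  have union: "grid_union C = grid_union ?P \<union> R"
    unfolding R_def grid_union_def by blast
  have sR: "\<psi> x v < 4/10" if "x \<in> R" for x
  proof -
    obtain p where p: "p \<in> C - ?P" "x \<in> grid_cell (fst p) (snd p)"
      using \<open>x \<in> R\<close> unfolding R_def grid_union_def by blast
    then obtain y where y: "y \<in> grid_cell (fst p) (snd p)" "\<psi> y v \<le> 3/10"
      by (auto simp: not_less)
    show ?thesis using osc[of "fst p" "snd p", OF _ p(2) y(1)] p(1) y(2) by force
  qed
  have "continuous_map (powertop_on R) (realization_top (K \<union> insert v ` L)) \<psi>"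
    using continuous_map_from_subtopology_mono[OF \<psi>] union by blast
  moreover have "\<psi> x v < 1" if "x \<in> R" for x using sR[OF that] by simp
  ultimately have pushR: "continuous_map (powertop_on R) (realization_top K) (\<lambda>x. push_off v (\<psi> x))"
    by (intro continuous_map_push_off(1)[OF v LK]) auto
  define \<kappa> where "\<kappa> x = (if x \<in> grid_union ?P then \<Lambda> x else push_off v (\<psi> x))" for x
  have "continuous_map (powertop_on (grid_union ?P \<union> R)) (realization_top K) \<kappa>"
    unfolding \<kappa>_def
  proof (rule continuous_map_paste_closedin[OF closedin_grid_union _ _ pushR])
    show "finite ?P" "closedin (powertop_real UNIV) R"
      unfolding R_def using fin by (simp_all add: closedin_grid_union)
    show "continuous_map (powertop_on (grid_union ?P)) (realization_top K) \<Lambda>"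
      by (rule continuous_map_realization_mono[OF \<Lambda> LK])
    show "\<Lambda> x = push_off v (\<psi> x)" if "x \<in> grid_union ?P" "x \<in> R" for x
      using that sR \<Lambda>_push by force
  qed
  show thesis
  proof (rule that)
    show "continuous_map (powertop_on (grid_union C)) (realization_top K) \<kappa>"
      unfolding union by fact
    show "\<kappa> x = push_off v (\<psi> x)" if "x \<in> grid_union C" "\<psi> x v < 85/100" for x
      using that \<Lambda>_push unfolding \<kappa>_def by auto
    show "\<kappa> x \<in> realization L" if "x \<in> grid_union C" "85/100 \<le> \<psi> x v" for x
    proof -
      have "x \<in> grid_union ?P" using that union sR by fastforce
      then show ?thesis using continuous_map_funspace[OF \<Lambda>] unfolding \<kappa>_def by auto
    qed
  qed
qed

lemma cone_union_nullhomotopic_maps_nsphere: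
  assumes K: "downward_closed K" and L: "downward_closed L" and LK: "L \<subseteq> K" and v: "v \<notin> \<Union>K"
    and hK: "k_connected m (realization_top K)" and hL: "k_connected (m - 1) (realization_top L)"
    and i: "int i \<le> m"
  shows "nullhomotopic_maps (nsphere i) (realization_top (K \<union> insert v ` L))"
  unfolding nullhomotopic_maps_def
proof (intro allI impI)
  let ?X = "K \<union> insert v ` L"
  fix \<phi> assume \<phi>: "continuous_map (nsphere i) (realization_top ?X) \<phi>"
  obtain M where M: "M \<ge> 1" and osc: "\<And>z J x y. (z, J) \<in> box_cells i M \<Longrightarrow> x \<in> grid_cell z J \<Longrightarrow>
      y \<in> grid_cell z J \<Longrightarrow> \<bar>\<phi> (sphere_projection (box_center i M) id i x) v
        - \<phi> (sphere_projection (box_center i M) id i y) v\<bar> < 1/10"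
    by (rule box_cells_fine[OF continuous_map_realization_coordinate[OF \<phi>], where \<epsilon> = "1/10"]) auto
  define F where "F = sphere_projection (box_center i M) id i"
  define B where "B = powertop_on (box_boundary i M)"
  have hF: "homeomorphic_map B (nsphere i) F"
    unfolding F_def B_def by (rule homeomorphic_map_box_boundary[OF M])
  then obtain G where FG: "homeomorphic_maps B (nsphere i) F G"
    using homeomorphic_map_maps by blast
  have "continuous_map B (nsphere i) F"
    using hF by (rule homeomorphic_imp_continuous_map)
  then have \<psi>: "continuous_map B (realization_top ?X) (\<phi> \<circ> F)"
    using \<phi> by (rule continuous_map_compose)
  have "m \<ge> 0" using i by simp
  then have L_ne: "realization L \<noteq> {}" using hL by (simp add: k_connected_def)
  note null = nullhomotopic_maps_box_cells[OF hL i]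
  have \<psi>': "continuous_map (powertop_on (grid_union (box_cells i M))) (realization_top ?X) (\<phi> \<circ> F)"
    using \<psi> unfolding B_def grid_union_box_cells .
  obtain \<kappa> where \<kappa>: "continuous_map (powertop_on (grid_union (box_cells i M))) (realization_top K) \<kappa>"
    and low: "\<And>x. x \<in> grid_union (box_cells i M) \<Longrightarrow> (\<phi> \<circ> F) x v < 85/100 \<Longrightarrow>
      \<kappa> x = push_off v ((\<phi> \<circ> F) x)"
    and high: "\<And>x. x \<in> grid_union (box_cells i M) \<Longrightarrow> 85/100 \<le> (\<phi> \<circ> F) x v \<Longrightarrow>
      \<kappa> x \<in> realization L"
    by (rule push_off_extension[where C = "box_cells i M",
          OF v LK finite_box_cells grid_complex_box_cells L_ne null \<psi>'])
       (use osc in \<open>auto simp: F_def\<close>)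
  note \<kappa> = \<kappa>[unfolded grid_union_box_cells, folded B_def]
  have "homotopic_with (\<lambda>_. True) B (realization_top ?X) (\<phi> \<circ> F) \<kappa>"
    by (rule homotopic_push_off[OF K L LK v _ _ \<psi> \<kappa>, of "85/100"])
       (use low high in \<open>auto simp: B_def grid_union_box_cells\<close>)
  moreover obtain c where "homotopic_with (\<lambda>_. True) B (realization_top ?X) \<kappa> (\<lambda>_. c)"
  proof -
    obtain c where "homotopic_with (\<lambda>_. True) B (realization_top K) \<kappa> (\<lambda>_. c)"
      using nullhomotopic_maps_box_boundary[OF hK i M] \<kappa> unfolding B_def nullhomotopic_maps_def
      by blast
    from homotopic_realization_mono[OF this] show thesis by (rule that) blast
  qed
  ultimately have "homotopic_with (\<lambda>_. True) B (realization_top ?X) (\<phi> \<circ> F) (\<lambda>_. c)"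
    by (rule homotopic_with_trans)
  from nullhomotopic_through_homeomorphism[OF FG \<phi> this]
  show "\<exists>c. homotopic_with (\<lambda>_. True) (nsphere i) (realization_top ?X) \<phi> (\<lambda>_. c)" by blast
qed

theorem k_connected_cone_union:
  assumes K: "downward_closed K" and L: "downward_closed L" and LK: "L \<subseteq> K" and v: "v \<notin> \<Union>K"
    and hK: "k_connected m (realization_top K)" and hL: "k_connected (m - 1) (realization_top L)"
  shows "k_connected m (realization_top (K \<union> insert v ` L))"
  unfolding k_connected_iff
proof (intro conjI impI allI)
  assume "m \<ge> -1"
  then have "realization K \<noteq> {}" using hK by (simp add: k_connected_def)
  then show "topspace (realization_top (K \<union> insert v ` L)) \<noteq> {}"
    using realization_mono[of K "K \<union> insert v ` L"] by auto
next
  fix i :: nat assume "int i \<le> m"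
  then show "nullhomotopic_maps (nsphere i) (realization_top (K \<union> insert v ` L))"
    by (rule cone_union_nullhomotopic_maps_nsphere[OF K L LK v hK hL])
qed

section \<open>Independence complexes\<close>

lemma downward_closed_Ind_del: "downward_closed (Ind_del V E W)"
  unfolding downward_closed_def Ind_del_def independent_def by blast

lemma Ind_del_antimono: "W \<subseteq> W' \<Longrightarrow> Ind_del V E W' \<subseteq> Ind_del V E W"
  unfolding Ind_del_def by blast

lemma independent_insert:
  assumes "simple_graph V E"
  shows "independent E (insert a \<sigma>) \<longleftrightarrow> independent E \<sigma> \<and> (\<forall>y\<in>\<sigma>. \<not> E a y)"
  using assms unfolding simple_graph_def independent_def by blast

lemma Ind_del_split:
  assumes G: "simple_graph V E" and a: "a \<in> V" "a \<notin> W"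
  shows "Ind_del V E W = Ind_del V E (insert a W) \<union> insert a ` Ind_del V E (insert a W \<union> nbhd V E a)"
proof (intro equalityI subsetI)
  fix \<tau> assume "\<tau> \<in> Ind_del V E W"
  then have \<tau>: "\<tau> \<subseteq> V - W" "independent E \<tau>" by (auto simp: Ind_del_def)
  show "\<tau> \<in> Ind_del V E (insert a W) \<union> insert a ` Ind_del V E (insert a W \<union> nbhd V E a)"
  proof (cases "a \<in> \<tau>")
    case False
    then show ?thesis using \<tau> by (auto simp: Ind_del_def)
  next
    case True
    then have "\<tau> = insert a (\<tau> - {a})" by blast
    moreover have "independent E (\<tau> - {a})" "\<forall>y\<in>\<tau> - {a}. \<not> E a y"
      using \<tau>(2) independent_insert[OF G, of a "\<tau> - {a}"] \<open>\<tau> = insert a (\<tau> - {a})\<close> by auto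
    then have "\<tau> - {a} \<in> Ind_del V E (insert a W \<union> nbhd V E a)"
      using \<tau>(1) by (auto simp: Ind_del_def nbhd_def)
    ultimately show ?thesis by blast
  qed
next
  fix \<tau> assume "\<tau> \<in> Ind_del V E (insert a W) \<union> insert a ` Ind_del V E (insert a W \<union> nbhd V E a)"
  then show "\<tau> \<in> Ind_del V E W"
    using a independent_insert[OF G] by (auto simp: Ind_del_def nbhd_def)
qed

lemma k_connected_Ind_del_split:
  assumes G: "simple_graph V E" and a: "a \<in> V" "a \<notin> W"
    and "k_connected m (realization_top (Ind_del V E (insert a W)))"
    and "k_connected (m - 1) (realization_top (Ind_del V E (insert a W \<union> nbhd V E a)))"
  shows "k_connected m (realization_top (Ind_del V E W))"
proof -
  have "a \<notin> \<Union>(Ind_del V E (insert a W))" by (auto simp: Ind_del_def)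
  moreover have "Ind_del V E (insert a W \<union> nbhd V E a) \<subseteq> Ind_del V E (insert a W)"
    by (rule Ind_del_antimono) blast
  ultimately show ?thesis
    unfolding Ind_del_split[OF G a] using assms(4,5)
    by (intro k_connected_cone_union downward_closed_Ind_del)
qed

lemma k_connected_Ind_del_cone:
  assumes G: "simple_graph V E" and u: "u \<in> V" "u \<notin> W" and "nbhd V E u \<subseteq> W"
  shows "k_connected k (realization_top (Ind_del V E W))"
proof (rule cone_k_connected[OF downward_closed_Ind_del])
  have "\<not> E u u" using G by (simp add: simple_graph_def)
  then show "{u} \<in> Ind_del V E W" using u by (simp add: Ind_del_def independent_def)
  fix \<tau> assume "\<tau> \<in> Ind_del V E W"
  then show "insert u \<tau> \<in> Ind_del V E W"
    using u assms(4) independent_insert[OF G] by (auto simp: Ind_del_def nbhd_def)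
qed

theorem corollary3p10:
  fixes V :: "'a set" and E :: "'a \<Rightarrow> 'a \<Rightarrow> bool" and u v w :: 'a and k :: int
  assumes "simple_graph V E"
    and "u \<in> V" and "v \<in> V" and "w \<in> V"
    and "u \<noteq> v" and "u \<noteq> w" and "v \<noteq> w"
    and "nbhd V E u = {v, w}"
    and "\<not> E v w"
    and "k_connected (k - 1) (realization_top (Ind_del V E (nbhd V E u \<union> nbhd V E v)))"
    and "k_connected (k - 1) (realization_top (Ind_del V E (nbhd V E u \<union> nbhd V E w)))"
    and "k_connected (k - 2)
           (realization_top (Ind_del V E (nbhd V E u \<union> nbhd V E v \<union> nbhd V E w)))"
  shows "k_connected k (realization_top (Ind_del V E {}))"
proof -
  note G = assms(1) and Nu = assms(8)
  have "k_connected k (realization_top (Ind_del V E {w, v}))"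
    by (rule k_connected_Ind_del_cone[OF G assms(2)]) (use assms(5,6) Nu in auto)
  then have "k_connected k (realization_top (Ind_del V E {v}))"
    using k_connected_Ind_del_split[OF G assms(4), of "{v}" k] assms(7,11) Nu
    by (simp add: insert_commute)
  moreover have "k_connected (k - 1) (realization_top (Ind_del V E (insert v (nbhd V E v))))"
  proof (rule k_connected_Ind_del_split[OF G assms(4)])
    show "w \<notin> insert v (nbhd V E v)" using assms(7,9) by (auto simp: nbhd_def)
    show "k_connected (k - 1) (realization_top (Ind_del V E (insert w (insert v (nbhd V E v)))))"
      using assms(10) Nu by (simp add: insert_commute)
    show "k_connected (k - 1 - 1)
        (realization_top (Ind_del V E (insert w (insert v (nbhd V E v)) \<union> nbhd V E w)))"
      using assms(12) Nu by (simp add: insert_commute)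
  qed
  ultimately show ?thesis
    using k_connected_Ind_del_split[OF G assms(3), of "{}" k] by simp
qed

end
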